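(* Let $M$ be an exact $\mathfrak{K}$-module. Assume that one of the pieces $M_0$, $M_1$ or $M_2$ is uniquely $p$-divisible. Then the other two pieces are uniquely $p$-divisible as well. And there are a $\mathbb{Z}/2$-graded $\mathbb{Z}[1/p]$-module $X$ and $\mathbb{Z}/2$-graded $\mathbb{Z}[\vartheta,1/p]$-modules $Y,Z$ such that $M$ is isomorphic to the exact $\mathfrak{K}$-module $E(X,Y,Z)$.
   Context: Fix a prime $p$, $N(x)=1+x+\dots+x^{p-1}$, and $\vartheta$ a primitive $p$-th root of unity. A $\mathfrak{K}$-module $M$ amounts to $\mathbb{Z}/2$-graded abelian groups $M_0,M_1,M_2$ with homomorphisms $\alpha_{jk}\colon M_k\to M_j$ ($j\neq k$; $\alpha_{12},\alpha_{21}$ grading-reversing, others grading-preserving) with $\alpha_{jk}\alpha_{km}=0$ for $\{j,k,m\}=\{0,1,2\}$ and, for $t_0:=1-\alpha_{02}\alpha_{20}$, $s_1:=1-\alpha_{12}\alpha_{21}$, $t_2:=1-\alpha_{20}\alpha_{02}$, $s_2:=1-\alpha_{21}\alpha_{12}$: $\alpha_{01}\alpha_{10}=N(t_0)$, $\alpha_{10}\alpha_{01}=N(s_1)$, $N(t_2)+N(s_2)=p$. Morphisms are triples of grading-preserving maps commuting with all $\alpha_{jk}$. $M$ is exact if the cyclic sequences $M_0\xrightarrow{\alpha_{10}}M_1\xrightarrow{\alpha_{21}}M_2\xrightarrow{\alpha_{02}}M_0$ and $M_0\xrightarrow{\alpha_{20}}M_2\xrightarrow{\alpha_{12}}M_1\xrightarrow{\alpha_{01}}M_0$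 are exact. Uniquely $p$-divisible: multiplication by $p$ bijective. For $X,Y,Z$ as in the claim, $E(X,Y,Z)$ is the exact $\mathfrak{K}$-module with $M_0=X\oplus Y$, $M_1=X\oplus Z$, $M_2=Y\oplus\Sigma Z$ ($\Sigma Z$ is $Z$ with opposite parity), $\alpha_{01}(x,z)=(x,0)$, $\alpha_{10}(x,y)=(px,0)$, $\alpha_{12}(y,z)=(0,(1-\vartheta)z)$, $\alpha_{21}(x,z)=(0,z)$, $\alpha_{20}(x,y)=(y,0)$, $\alpha_{02}(y,z)=(0,(1-\vartheta)y)$. *)

theory Defs
  imports "HOL-Algebra.Group" "HOL-Algebra.FiniteProduct" "HOL-Computational_Algebra.Primes"
begin

text \<open>Abelian groups are HOL-Algebra commutative groups (multiplicative notation: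
  the group law written additively in the paper is \<open>\<otimes>\<close>, \<open>0\<close> is \<open>\<one>\<close>, \<open>n x\<close> is \<open>x [^] n\<close>).\<close>

record 'a gmonoid = "'a monoid" +
  ev_part :: "'a set"
  od_part :: "'a set"

definition graded_group :: "('a, 'm) gmonoid_scheme \<Rightarrow> bool" where
  "graded_group G \<longleftrightarrow> comm_group G \<and> subgroup (ev_part G) G \<and> subgroup (od_part G) G \<and>
     (\<forall>x\<in>carrier G. \<exists>!ab. fst ab \<in> ev_part G \<and> snd ab \<in> od_part G \<and> x = fst ab \<otimes>\<^bsub>G\<^esub> snd ab)"

definition gpres :: "('a, 'm) gmonoid_scheme \<Rightarrow> ('b, 'n) gmonoid_scheme \<Rightarrow> ('a \<Rightarrow> 'b) \<Rightarrow> bool" where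
  "gpres G H f \<longleftrightarrow> f \<in> hom G H \<and> f ` ev_part G \<subseteq> ev_part H \<and> f ` od_part G \<subseteq> od_part H"

definition grev :: "('a, 'm) gmonoid_scheme \<Rightarrow> ('b, 'n) gmonoid_scheme \<Rightarrow> ('a \<Rightarrow> 'b) \<Rightarrow> bool" where
  "grev G H f \<longleftrightarrow> f \<in> hom G H \<and> f ` ev_part G \<subseteq> od_part H \<and> f ` od_part G \<subseteq> ev_part H"

definition one_minus :: "('a, 'm) monoid_scheme \<Rightarrow> ('a \<Rightarrow> 'a) \<Rightarrow> 'a \<Rightarrow> 'a" where
  "one_minus G f = (\<lambda>x. x \<otimes>\<^bsub>G\<^esub> inv\<^bsub>G\<^esub> (f x))"

definition normop :: "nat \<Rightarrow> ('a, 'm) monoid_scheme \<Rightarrow> ('a \<Rightarrow> 'a) \<Rightarrow> 'a \<Rightarrow> 'a" where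
  "normop p G f = (\<lambda>x. finprod G (\<lambda>i. (f ^^ i) x) {..<p})"

definition upd :: "nat \<Rightarrow> ('a, 'm) monoid_scheme \<Rightarrow> bool" where
  "upd p G \<longleftrightarrow> bij_betw (\<lambda>x. x [^]\<^bsub>G\<^esub> p) (carrier G) (carrier G)"

record ('a, 'b, 'c) kmod =
  M0 :: "'a gmonoid"
  M1 :: "'b gmonoid"
  M2 :: "'c gmonoid"
  a01 :: "'b \<Rightarrow> 'a"
  a10 :: "'a \<Rightarrow> 'b"
  a12 :: "'c \<Rightarrow> 'b"
  a21 :: "'b \<Rightarrow> 'c"
  a02 :: "'c \<Rightarrow> 'a"
  a20 :: "'a \<Rightarrow> 'c"

definition kmodule :: "nat \<Rightarrow> ('a, 'b, 'c) kmod \<Rightarrow> bool" where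
  "kmodule p M \<longleftrightarrow>
     graded_group (M0 M) \<and> graded_group (M1 M) \<and> graded_group (M2 M) \<and>
     gpres (M1 M) (M0 M) (a01 M) \<and> gpres (M0 M) (M1 M) (a10 M) \<and>
     grev (M2 M) (M1 M) (a12 M) \<and> grev (M1 M) (M2 M) (a21 M) \<and>
     gpres (M2 M) (M0 M) (a02 M) \<and> gpres (M0 M) (M2 M) (a20 M) \<and>
     (\<forall>x\<in>carrier (M2 M). a01 M (a12 M x) = \<one>\<^bsub>M0 M\<^esub>) \<and>
     (\<forall>x\<in>carrier (M1 M). a02 M (a21 M x) = \<one>\<^bsub>M0 M\<^esub>) \<and>
     (\<forall>x\<in>carrier (M2 M). a10 M (a02 M x) = \<one>\<^bsub>M1 M\<^esub>) \<and>
     (\<forall>x\<in>carrier (M0 M). a12 M (a20 M x) = \<one>\<^bsub>M1 M\<^esub>) \<and>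
     (\<forall>x\<in>carrier (M1 M). a20 M (a01 M x) = \<one>\<^bsub>M2 M\<^esub>) \<and>
     (\<forall>x\<in>carrier (M0 M). a21 M (a10 M x) = \<one>\<^bsub>M2 M\<^esub>) \<and>
     (\<forall>x\<in>carrier (M0 M). a01 M (a10 M x) = normop p (M0 M) (one_minus (M0 M) (a02 M \<circ> a20 M)) x) \<and>
     (\<forall>x\<in>carrier (M1 M). a10 M (a01 M x) = normop p (M1 M) (one_minus (M1 M) (a12 M \<circ> a21 M)) x) \<and>
     (\<forall>x\<in>carrier (M2 M).
        normop p (M2 M) (one_minus (M2 M) (a20 M \<circ> a02 M)) x \<otimes>\<^bsub>M2 M\<^esub>
        normop p (M2 M) (one_minus (M2 M) (a21 M \<circ> a12 M)) x = x [^]\<^bsub>M2 M\<^esub> p)"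

definition exact_at :: "('a, 'm) monoid_scheme \<Rightarrow> ('b, 'n) monoid_scheme \<Rightarrow> ('c, 'o) monoid_scheme
    \<Rightarrow> ('a \<Rightarrow> 'b) \<Rightarrow> ('b \<Rightarrow> 'c) \<Rightarrow> bool" where
  "exact_at A B C f g \<longleftrightarrow> {y \<in> carrier B. g y = \<one>\<^bsub>C\<^esub>} = f ` carrier A"

definition exact_kmodule :: "('a, 'b, 'c) kmod \<Rightarrow> bool" where
  "exact_kmodule M \<longleftrightarrow>
     exact_at (M0 M) (M1 M) (M2 M) (a10 M) (a21 M) \<and>
     exact_at (M1 M) (M2 M) (M0 M) (a21 M) (a02 M) \<and>
     exact_at (M2 M) (M0 M) (M1 M) (a02 M) (a10 M) \<and>
     exact_at (M0 M) (M2 M) (M1 M) (a20 M) (a12 M) \<and>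
     exact_at (M2 M) (M1 M) (M0 M) (a12 M) (a01 M) \<and>
     exact_at (M1 M) (M0 M) (M2 M) (a01 M) (a20 M)"

definition kmorph :: "('a, 'b, 'c) kmod \<Rightarrow> ('d, 'e, 'f) kmod
    \<Rightarrow> ('a \<Rightarrow> 'd) \<Rightarrow> ('b \<Rightarrow> 'e) \<Rightarrow> ('c \<Rightarrow> 'f) \<Rightarrow> bool" where
  "kmorph M N f0 f1 f2 \<longleftrightarrow>
     gpres (M0 M) (M0 N) f0 \<and> gpres (M1 M) (M1 N) f1 \<and> gpres (M2 M) (M2 N) f2 \<and>
     (\<forall>x\<in>carrier (M1 M). f0 (a01 M x) = a01 N (f1 x)) \<and>
     (\<forall>x\<in>carrier (M0 M). f1 (a10 M x) = a10 N (f0 x)) \<and>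
     (\<forall>x\<in>carrier (M2 M). f1 (a12 M x) = a12 N (f2 x)) \<and>
     (\<forall>x\<in>carrier (M1 M). f2 (a21 M x) = a21 N (f1 x)) \<and>
     (\<forall>x\<in>carrier (M2 M). f0 (a02 M x) = a02 N (f2 x)) \<and>
     (\<forall>x\<in>carrier (M0 M). f2 (a20 M x) = a20 N (f0 x))"

definition kiso :: "('a, 'b, 'c) kmod \<Rightarrow> ('d, 'e, 'f) kmod \<Rightarrow> bool" where
  "kiso M N \<longleftrightarrow> (\<exists>f0 f1 f2 g0 g1 g2.
     kmorph M N f0 f1 f2 \<and> kmorph N M g0 g1 g2 \<and>
     (\<forall>x\<in>carrier (M0 M). g0 (f0 x) = x) \<and> (\<forall>y\<in>carrier (M0 N). f0 (g0 y) = y) \<and>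
     (\<forall>x\<in>carrier (M1 M). g1 (f1 x) = x) \<and> (\<forall>y\<in>carrier (M1 N). f1 (g1 y) = y) \<and>
     (\<forall>x\<in>carrier (M2 M). g2 (f2 x) = x) \<and> (\<forall>y\<in>carrier (M2 N). f2 (g2 y) = y))"

text \<open>Z/2-graded Z[1/p]-modules and Z[\<vartheta>,1/p]-modules (\<open>\<vartheta>\<close> acts by a degree-preserving
  endomorphism th with N(th) = 0, since Z[\<vartheta>] = Z[x]/(1+x+...+x^(p-1)))\<close>
definition zp_module :: "nat \<Rightarrow> 'a gmonoid \<Rightarrow> bool" where
  "zp_module p X \<longleftrightarrow> graded_group X \<and> upd p X"

definition zth_module :: "nat \<Rightarrow> 'a gmonoid \<Rightarrow> ('a \<Rightarrow> 'a) \<Rightarrow> bool" where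
  "zth_module p Y th \<longleftrightarrow> graded_group Y \<and> upd p Y \<and> gpres Y Y th \<and>
     (\<forall>y\<in>carrier Y. normop p Y th y = \<one>\<^bsub>Y\<^esub>)"

definition gsum :: "'a gmonoid \<Rightarrow> 'b gmonoid \<Rightarrow> ('a \<times> 'b) gmonoid" where
  "gsum G H = \<lparr>carrier = carrier G \<times> carrier H,
     monoid.mult = (\<lambda>u v. (fst u \<otimes>\<^bsub>G\<^esub> fst v, snd u \<otimes>\<^bsub>H\<^esub> snd v)),
     monoid.one = (\<one>\<^bsub>G\<^esub>, \<one>\<^bsub>H\<^esub>),
     ev_part = ev_part G \<times> ev_part H, od_part = od_part G \<times> od_part H\<rparr>"

definition gshift :: "'a gmonoid \<Rightarrow> 'a gmonoid" where
  "gshift G = G\<lparr>ev_part := od_part G, od_part := ev_part G\<rparr>"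

definition Emod :: "nat \<Rightarrow> 'x gmonoid \<Rightarrow> 'y gmonoid \<Rightarrow> ('y \<Rightarrow> 'y) \<Rightarrow> 'z gmonoid \<Rightarrow> ('z \<Rightarrow> 'z)
    \<Rightarrow> ('x \<times> 'y, 'x \<times> 'z, 'y \<times> 'z) kmod" where
  "Emod p X Y thY Z thZ = \<lparr>
     M0 = gsum X Y, M1 = gsum X Z, M2 = gsum Y (gshift Z),
     a01 = (\<lambda>(x, z). (x, \<one>\<^bsub>Y\<^esub>)),
     a10 = (\<lambda>(x, y). (x [^]\<^bsub>X\<^esub> p, \<one>\<^bsub>Z\<^esub>)),
     a12 = (\<lambda>(y, z). (\<one>\<^bsub>X\<^esub>, one_minus Z thZ z)),
     a21 = (\<lambda>(x, z). (\<one>\<^bsub>Y\<^esub>, z)),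
     a02 = (\<lambda>(y, z). (\<one>\<^bsub>X\<^esub>, one_minus Y thY y)),
     a20 = (\<lambda>(x, y). (y, \<one>\<^bsub>Z\<^esub>))\<rparr>"

end

theory Submission
  imports Defs "HOL-Algebra.Coset"
begin

(* Exactness transports p-torsion and p-th roots around the two exact cycles
   M0 -> M1 -> M2 -> M0 and M0 -> M2 -> M1 -> M0.  Suppose M0 is uniquely p-divisible and let
   u = a21 a12 on M2.  Lifting along the cycles gives M2[p] = u(M2[p]) and M2 = u(M2) + p M2,
   hence the same for u^(p-1).  The one non-formal input is the congruence
   N(1 - T) = (-1)^(p-1) T^(p-1) modulo p: N(t2) vanishes on M2[p] and takes values in p M2,
   hence so does N(s2) = N(1 - u) = p - N(t2), and therefore u^(p-1) kills M2[p] and maps M2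
   into p M2.  So M2 is uniquely p-divisible; the way back to M0 is formal, and M1 is handled by
   the symmetry exchanging the indices 0 and 1.

   Once all pieces are uniquely p-divisible, N(t0) = p on X = ker a20, so m |-> a01 a10 m / p
   projects M0 onto X along Y = ker a10; likewise M1 = X + Z with Z = ker a01, and dividing
   p w = N(t2) w + N(s2) w by p gives M2 = a21(Z) + a20(Y).  Letting theta act on Y by t0 and
   on Z by s1 identifies M with E(X, Y, Z). *)

section \<open>Polynomials in an endomorphism and the norm of \<open>1 - f\<close>\<close>

text \<open>\<open>endo_poly G f c n\<close> is the integer polynomial \<open>c 0 + c 1 T + \<dots> + c (n - 1) T\<^sup>n\<^sup>-\<^sup>1\<close>
  evaluated at \<open>T = f\<close> (written multiplicatively); \<open>shift_coeffs c\<close> are the coefficients of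
  \<open>T\<close> times it and \<open>one_minus_pow_coeff i\<close> those of \<open>(1 - T)\<^sup>i\<close>.\<close>

definition endo_poly :: "('a, 'm) monoid_scheme \<Rightarrow> ('a \<Rightarrow> 'a) \<Rightarrow> (nat \<Rightarrow> int) \<Rightarrow> nat \<Rightarrow> 'a \<Rightarrow> 'a"
  where "endo_poly G f c n x = finprod G (\<lambda>k. (f ^^ k) x [^]\<^bsub>G\<^esub> c k) {..<n}"

definition shift_coeffs :: "(nat \<Rightarrow> int) \<Rightarrow> nat \<Rightarrow> int"
  where "shift_coeffs c k = (case k of 0 \<Rightarrow> 0 | Suc j \<Rightarrow> c j)"

definition one_minus_pow_coeff :: "nat \<Rightarrow> nat \<Rightarrow> int"
  where "one_minus_pow_coeff i k = (-1) ^ k * int (i choose k)"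

lemma shift_coeffs_0 [simp]: "shift_coeffs c 0 = 0"
  and shift_coeffs_Suc [simp]: "shift_coeffs c (Suc k) = c k"
  by (simp_all add: shift_coeffs_def)

lemma one_minus_pow_coeff_Suc:
  "one_minus_pow_coeff (Suc i) k = one_minus_pow_coeff i k - shift_coeffs (one_minus_pow_coeff i) k"
  by (cases k) (simp_all add: one_minus_pow_coeff_def algebra_simps)

lemma sum_one_minus_pow_coeff:
  assumes "p > 0"
  shows "(\<Sum>i<p. one_minus_pow_coeff i k) = (-1) ^ k * int (p choose Suc k)"
proof -
  have "{..<p} = {..p - 1}"
    using assms by auto
  then have "(\<Sum>i<p. i choose k) = p choose Suc k"
    using sum_choose_upper[of k "p - 1"] assms by simp
  moreover have "(\<Sum>i<p. one_minus_pow_coeff i k) = (-1) ^ k * int (\<Sum>i<p. i choose k)"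
    by (simp add: one_minus_pow_coeff_def sum_distrib_left)
  ultimately show ?thesis
    by simp
qed

lemma (in comm_monoid) finprod_lessThan_Suc:
  "(\<And>i. g i \<in> carrier G) \<Longrightarrow> finprod G g {..<Suc n} = g n \<otimes> finprod G g {..<n}"
  unfolding lessThan_Suc by (subst finprod_insert) auto

locale comm_group_endo = comm_group G for G (structure) +
  fixes f
  assumes f_hom: "f \<in> hom G G"
begin

sublocale f: group_hom G G f
  by unfold_locales (rule f_hom)

lemma funpow_hom: "f ^^ k \<in> hom G G"
proof (induction k)
  case 0
  show ?case
    by (simp add: hom_def)
next
  case (Suc k)
  show ?case
    using Group.hom_compose[OF Suc f_hom] by (simp only: funpow.simps)
qed

lemma funpow_closed [simp]: "x \<in> carrier G \<Longrightarrow> (f ^^ k) x \<in> carrier G"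
  by (rule hom_in_carrier[OF funpow_hom])

lemma funpow_mult [simp]:
  "x \<in> carrier G \<Longrightarrow> y \<in> carrier G \<Longrightarrow> (f ^^ k) (x \<otimes> y) = (f ^^ k) x \<otimes> (f ^^ k) y"
  by (rule Group.hom_mult[OF funpow_hom])

lemma funpow_one [simp]: "(f ^^ k) \<one> = \<one>"
  by (induction k) auto

lemma funpow_nat_pow: "x \<in> carrier G \<Longrightarrow> (f ^^ k) (x [^] (n::nat)) = (f ^^ k) x [^] n"
  by (rule Group.hom_nat_pow[OF funpow_hom _ is_group is_group])

lemma endo_poly_0 [simp]: "endo_poly G f c 0 x = \<one>"
  by (simp add: endo_poly_def)

lemma endo_poly_Suc:
  "x \<in> carrier G \<Longrightarrow> endo_poly G f c (Suc n) x = (f ^^ n) x [^] c n \<otimes> endo_poly G f c n x"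
  unfolding endo_poly_def by (rule finprod_lessThan_Suc) simp

lemma endo_poly_closed [simp]: "x \<in> carrier G \<Longrightarrow> endo_poly G f c n x \<in> carrier G"
  by (induction n) (auto simp: endo_poly_Suc)

lemma endo_poly_one [simp]: "endo_poly G f c n \<one> = \<one>"
  by (induction n) (simp_all add: endo_poly_Suc)

lemma endo_poly_add:
  "x \<in> carrier G \<Longrightarrow> endo_poly G f (\<lambda>k. c k + d k) n x = endo_poly G f c n x \<otimes> endo_poly G f d n x"
  by (induction n) (auto simp: endo_poly_Suc int_pow_mult m_ac)

lemma endo_poly_uminus:
  "x \<in> carrier G \<Longrightarrow> endo_poly G f (\<lambda>k. - c k) n x = inv (endo_poly G f c n x)"
  by (induction n) (auto simp: endo_poly_Suc int_pow_neg inv_mult m_ac)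

lemma endo_poly_zero: "x \<in> carrier G \<Longrightarrow> endo_poly G f (\<lambda>k. 0) n x = \<one>"
  by (induction n) (auto simp: endo_poly_Suc)

lemma endo_poly_sum:
  "x \<in> carrier G \<Longrightarrow> endo_poly G f (\<lambda>k. \<Sum>i<m. c i k) n x = finprod G (\<lambda>i. endo_poly G f (c i) n x) {..<m::nat}"
  by (induction m) (simp_all add: endo_poly_zero endo_poly_add finprod_lessThan_Suc add.commute)

lemma endo_poly_shift:
  "x \<in> carrier G \<Longrightarrow> f (endo_poly G f c n x) = endo_poly G f (shift_coeffs c) (Suc n) x"
  by (induction n) (simp_all add: endo_poly_Suc f.hom_int_pow)

lemma endo_poly_truncate:
  assumes "x \<in> carrier G" and "\<And>k. k \<ge> m \<Longrightarrow> c k = 0" and "m \<le> n"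
  shows "endo_poly G f c n x = endo_poly G f c m x"
  using assms(3) by (induction n rule: dec_induct) (simp_all add: assms endo_poly_Suc)

lemma endo_poly_nat_pow:
  assumes "x \<in> carrier G"
  shows "endo_poly G f c n (x [^] (m::nat)) = endo_poly G f c n x [^] m"
proof (induction n)
  case (Suc n)
  have "((f ^^ n) x [^] m) [^] c n = ((f ^^ n) x [^] c n) [^] m"
    using assms by (simp add: int_pow_pow mult.commute flip: int_pow_int)
  then show ?case
    using Suc assms by (simp add: endo_poly_Suc funpow_nat_pow nat_pow_distrib)
qed simp

lemma one_minus_funpow_eq_endo_poly:
  "x \<in> carrier G \<Longrightarrow> (one_minus G f ^^ i) x = endo_poly G f (one_minus_pow_coeff i) (Suc i) x"
proof (induction i)
  case 0
  then show ?case
    by (simp add: endo_poly_Suc one_minus_pow_coeff_def)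
next
  case (Suc i)
  let ?c = "one_minus_pow_coeff i"
  have trunc: "endo_poly G f ?c (Suc i) x = endo_poly G f ?c (Suc (Suc i)) x"
    using Suc.prems by (intro endo_poly_truncate[symmetric]) (auto simp: one_minus_pow_coeff_def)
  have "(one_minus G f ^^ Suc i) x = endo_poly G f ?c (Suc i) x \<otimes> inv (f (endo_poly G f ?c (Suc i) x))"
    using Suc by (simp add: one_minus_def)
  also have "\<dots> = endo_poly G f ?c (Suc (Suc i)) x \<otimes> inv (endo_poly G f (shift_coeffs ?c) (Suc (Suc i)) x)"
    using Suc.prems trunc endo_poly_shift[of x ?c "Suc i"] by simp
  also have "\<dots> = endo_poly G f (\<lambda>k. ?c k + - shift_coeffs ?c k) (Suc (Suc i)) x"
    by (simp only: endo_poly_add[OF Suc.prems] endo_poly_uminus[OF Suc.prems])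
  finally show ?case
    by (simp add: one_minus_pow_coeff_Suc)
qed

lemma normop_one_minus_eq_endo_poly:
  assumes x: "x \<in> carrier G" and "p > 0"
  shows "normop p G (one_minus G f) x = endo_poly G f (\<lambda>k. (-1) ^ k * int (p choose Suc k)) p x"
proof -
  have "normop p G (one_minus G f) x = finprod G (\<lambda>i. endo_poly G f (one_minus_pow_coeff i) p x) {..<p}"
    unfolding normop_def
  proof (rule finprod_cong')
    fix i
    assume "i \<in> {..<p}"
    then have "endo_poly G f (one_minus_pow_coeff i) p x = endo_poly G f (one_minus_pow_coeff i) (Suc i) x"
      using x by (intro endo_poly_truncate) (auto simp: one_minus_pow_coeff_def)
    then show "(one_minus G f ^^ i) x = endo_poly G f (one_minus_pow_coeff i) p x"
      using x by (simp add: one_minus_funpow_eq_endo_poly)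
  qed (use x in auto)
  also have "\<dots> = endo_poly G f (\<lambda>k. \<Sum>i<p. one_minus_pow_coeff i k) p x"
    using x by (simp add: endo_poly_sum)
  finally show ?thesis
    using assms(2) by (simp add: sum_one_minus_pow_coeff)
qed

text \<open>Since \<open>p\<close> divides \<open>p choose (k + 1)\<close> for \<open>k < p - 1\<close>, the norm of \<open>1 - T\<close> is
  \<open>(-1)\<^sup>p\<^sup>-\<^sup>1 T\<^sup>p\<^sup>-\<^sup>1\<close> modulo \<open>p\<close>.\<close>

lemma normop_one_minus_mod_p:
  assumes p: "prime p" and x: "x \<in> carrier G"
  obtains d where "normop p G (one_minus G f) x
    = (f ^^ (p - 1)) x [^] ((-1::int) ^ (p - 1)) \<otimes> endo_poly G f d (p - 1) x [^] p"
proof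
  have p0: "p > 0"
    using p prime_gt_0_nat by blast
  define c where "c = (\<lambda>k. (-1::int) ^ k * int (p choose Suc k))"
  define d where "d = (\<lambda>k. (-1::int) ^ k * int ((p choose Suc k) div p))"
  have "endo_poly G f c (p - 1) x = endo_poly G f d (p - 1) (x [^] p)"
    unfolding endo_poly_def
  proof (rule finprod_cong')
    fix k
    assume "k \<in> {..<p - 1}"
    then have "p dvd (p choose Suc k)"
      using p by (intro dvd_choose_prime) auto
    then have "c k = int p * d k"
      by (simp add: c_def d_def algebra_simps flip: of_nat_mult)
    moreover have "(f ^^ k) (x [^] p) [^] d k = ((f ^^ k) x [^] int p) [^] d k"
      using x by (simp add: funpow_nat_pow int_pow_int)
    ultimately show "(f ^^ k) x [^] c k = (f ^^ k) (x [^] p) [^] d k"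
      using x by (simp add: int_pow_pow)
  qed (use x in auto)
  then have "endo_poly G f c (p - 1) x = endo_poly G f d (p - 1) x [^] p"
    using x by (simp add: endo_poly_nat_pow)
  moreover have "c (p - 1) = (-1) ^ (p - 1)"
    using p0 by (simp add: c_def)
  moreover have "normop p G (one_minus G f) x = endo_poly G f c (Suc (p - 1)) x"
    using normop_one_minus_eq_endo_poly[OF x p0] p0 by (simp add: c_def)
  ultimately show "normop p G (one_minus G f) x
    = (f ^^ (p - 1)) x [^] ((-1::int) ^ (p - 1)) \<otimes> endo_poly G f d (p - 1) x [^] p"
    using x by (simp add: endo_poly_Suc)
qed

lemma int_pow_sign_cancel:
  assumes "y \<in> carrier G" "u \<in> carrier G" "y [^] ((-1::int) ^ n) = u [^] (m::nat)"
  shows "y = (u [^] ((-1::int) ^ n)) [^] m"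
proof -
  have "y = (y [^] ((-1::int) ^ n)) [^] ((-1::int) ^ n)"
    using assms(1) by (simp add: int_pow_pow flip: power_mult_distrib)
  also have "\<dots> = (u [^] ((-1::int) ^ n)) [^] m"
    using assms by (simp add: int_pow_pow mult.commute flip: int_pow_int)
  finally show ?thesis .
qed

lemma funpow_eq_one_if_normop_one_minus_eq_one:
  assumes p: "prime p" and x: "x \<in> carrier G" "x [^] p = \<one>"
    and N: "normop p G (one_minus G f) x = \<one>"
  shows "(f ^^ (p - 1)) x = \<one>"
proof -
  obtain d where d: "normop p G (one_minus G f) x
    = (f ^^ (p - 1)) x [^] ((-1::int) ^ (p - 1)) \<otimes> endo_poly G f d (p - 1) x [^] p"
    using normop_one_minus_mod_p[OF p x(1)] .
  have "endo_poly G f d (p - 1) x [^] p = \<one>"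
    using x by (simp flip: endo_poly_nat_pow)
  then have "(f ^^ (p - 1)) x [^] ((-1::int) ^ (p - 1)) = \<one> [^] (1::nat)"
    using d N x(1) by simp
  from int_pow_sign_cancel[OF _ one_closed this] show ?thesis
    using x(1) by simp
qed

lemma funpow_is_pow_if_normop_one_minus_is_pow:
  assumes p: "prime p" and x: "x \<in> carrier G" and z: "z \<in> carrier G"
    and N: "normop p G (one_minus G f) x = z [^] p"
  shows "\<exists>w\<in>carrier G. (f ^^ (p - 1)) x = w [^] p"
proof -
  obtain d where d: "normop p G (one_minus G f) x
    = (f ^^ (p - 1)) x [^] ((-1::int) ^ (p - 1)) \<otimes> endo_poly G f d (p - 1) x [^] p"
    using normop_one_minus_mod_p[OF p x] .
  define q where "q = endo_poly G f d (p - 1) x"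
  have q: "q \<in> carrier G"
    using x by (simp add: q_def)
  have "z [^] p = (f ^^ (p - 1)) x [^] ((-1::int) ^ (p - 1)) \<otimes> q [^] p"
    using d N by (simp add: q_def)
  then have "(f ^^ (p - 1)) x [^] ((-1::int) ^ (p - 1)) = z [^] p \<otimes> inv (q [^] p)"
    using x q z by (subst inv_solve_right) auto
  also have "\<dots> = (z \<otimes> inv q) [^] p"
    using q z by (simp add: nat_pow_distrib nat_pow_inv)
  finally have "(f ^^ (p - 1)) x = ((z \<otimes> inv q) [^] ((-1::int) ^ (p - 1))) [^] p"
    using x q z by (intro int_pow_sign_cancel) auto
  then show ?thesis
    using q z by blast
qed

lemma normop_one_minus_of_fixed:
  assumes x: "x \<in> carrier G" and fx: "f x = \<one>"
  shows "normop p G (one_minus G f) x = x [^] p"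
proof -
  have "(one_minus G f ^^ i) x = x" for i
    by (induction i) (simp_all add: x fx one_minus_def)
  then show ?thesis
    using x by (simp add: normop_def finprod_const)
qed

lemma one_minus_closed [simp]: "x \<in> carrier G \<Longrightarrow> one_minus G f x \<in> carrier G"
  by (simp add: one_minus_def)

lemma one_minus_funpow_closed [simp]: "x \<in> carrier G \<Longrightarrow> (one_minus G f ^^ i) x \<in> carrier G"
  by (induction i) auto

lemma normop_one_minus_closed [simp]: "x \<in> carrier G \<Longrightarrow> normop p G (one_minus G f) x \<in> carrier G"
  unfolding normop_def by (intro finprod_closed) auto

text \<open>\<open>1 - f\<close> is the identity modulo the image of \<open>f\<close>.\<close>

lemma normop_one_minus_eq_pow_mult:
  assumes x: "x \<in> carrier G"
  obtains z where "z \<in> carrier G" "normop p G (one_minus G f) x = x [^] p \<otimes> f z"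
proof -
  have iter: "\<exists>z\<in>carrier G. (one_minus G f ^^ i) x = x \<otimes> f z" for i
  proof (induction i)
    case 0
    show ?case
      using x by (intro bexI[of _ \<one>]) simp_all
  next
    case (Suc i)
    then obtain z where z: "z \<in> carrier G" "(one_minus G f ^^ i) x = x \<otimes> f z"
      by blast
    have "(one_minus G f ^^ Suc i) x = one_minus G f (x \<otimes> f z)"
      using z(2) by simp
    also have "\<dots> = x \<otimes> f (z \<otimes> inv x \<otimes> inv (f z))"
      using z(1) x by (simp add: one_minus_def inv_mult m_ac)
    finally have "(one_minus G f ^^ Suc i) x = x \<otimes> f (z \<otimes> inv x \<otimes> inv (f z))" .
    moreover have "z \<otimes> inv x \<otimes> inv (f z) \<in> carrier G"
      using z(1) x by simp
    ultimately show ?case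
      by blast
  qed
  have "\<exists>z\<in>carrier G. finprod G (\<lambda>i. (one_minus G f ^^ i) x) {..<n} = x [^] n \<otimes> f z" for n
  proof (induction n)
    case 0
    show ?case
      by (intro bexI[of _ \<one>]) simp_all
  next
    case (Suc n)
    then obtain z where z: "z \<in> carrier G"
      "finprod G (\<lambda>i. (one_minus G f ^^ i) x) {..<n} = x [^] n \<otimes> f z"
      by blast
    obtain z' where z': "z' \<in> carrier G" "(one_minus G f ^^ n) x = x \<otimes> f z'"
      using iter by blast
    have "finprod G (\<lambda>i. (one_minus G f ^^ i) x) {..<Suc n} = (x \<otimes> f z') \<otimes> (x [^] n \<otimes> f z)"
      using x z z' by (simp add: finprod_lessThan_Suc)
    also have "\<dots> = x [^] Suc n \<otimes> f (z' \<otimes> z)"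
      using x z z' by (simp add: m_ac nat_pow_Suc2)
    finally show ?case
      using z z' by blast
  qed
  then show ?thesis
    using that unfolding normop_def by blast
qed

lemma funpow_image_mult_pow:
  assumes step: "\<And>y. y \<in> carrier G \<Longrightarrow> \<exists>w\<in>carrier G. \<exists>z\<in>carrier G. y = f w \<otimes> z [^] (n::nat)"
    and y: "y \<in> carrier G"
  shows "\<exists>w\<in>carrier G. \<exists>z\<in>carrier G. y = (f ^^ k) w \<otimes> z [^] n"
  using y
proof (induction k arbitrary: y)
  case 0
  then have "y = (f ^^ 0) y \<otimes> \<one> [^] n"
    by simp
  then show ?case
    using 0 one_closed by blast
next
  case (Suc k)
  then obtain w z where wz: "w \<in> carrier G" "z \<in> carrier G" "y = (f ^^ k) w \<otimes> z [^] n"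
    by blast
  obtain w' z' where wz': "w' \<in> carrier G" "z' \<in> carrier G" "w = f w' \<otimes> z' [^] n"
    using step[OF wz(1)] by blast
  have "y = (f ^^ Suc k) w' \<otimes> ((f ^^ k) z' \<otimes> z) [^] n"
    using wz wz' by (simp add: funpow_nat_pow nat_pow_distrib m_assoc funpow_Suc_right del: funpow.simps)
  moreover have "(f ^^ k) z' \<otimes> z \<in> carrier G"
    using wz wz' by simp
  ultimately show ?case
    using wz'(1) by blast
qed

end

lemma normop_one_minus_commute:
  assumes G: "comm_group G" and H: "comm_group H" and h: "h \<in> hom G H"
    and f: "f \<in> hom G G" and f': "f' \<in> hom H H"
    and comm: "\<And>y. y \<in> carrier G \<Longrightarrow> h (f y) = f' (h y)" and x: "x \<in> carrier G"
  shows "h (normop p G (one_minus G f) x) = normop p H (one_minus H f') (h x)"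
proof -
  interpret G: comm_group_endo G f
    using G f by (simp add: comm_group_endo_def comm_group_endo_axioms_def)
  interpret H: comm_group_endo H f'
    using H f' by (simp add: comm_group_endo_def comm_group_endo_axioms_def)
  interpret h: group_hom G H h
    using h by unfold_locales
  have "h (one_minus G f y) = one_minus H f' (h y)" if "y \<in> carrier G" for y
    using that by (simp add: one_minus_def comm)
  then have iter: "h ((one_minus G f ^^ i) x) = (one_minus H f' ^^ i) (h x)" for i
    by (induction i) (simp_all add: x)
  have "h (finprod G (\<lambda>i. (one_minus G f ^^ i) x) {..<n})
      = finprod H (\<lambda>i. (one_minus H f' ^^ i) (h x)) {..<n}" for n
    by (induction n) (simp_all add: G.finprod_lessThan_Suc H.finprod_lessThan_Suc iter x)
  then show ?thesis
    unfolding normop_def .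
qed

section \<open>Unique divisibility and exact sequences\<close>

definition ptorsion_free :: "nat \<Rightarrow> ('a, 'm) monoid_scheme \<Rightarrow> bool"
  where "ptorsion_free p G \<longleftrightarrow> (\<forall>x\<in>carrier G. x [^]\<^bsub>G\<^esub> p = \<one>\<^bsub>G\<^esub> \<longrightarrow> x = \<one>\<^bsub>G\<^esub>)"

definition pdivisible :: "nat \<Rightarrow> ('a, 'm) monoid_scheme \<Rightarrow> bool"
  where "pdivisible p G \<longleftrightarrow> (\<forall>y\<in>carrier G. \<exists>x\<in>carrier G. x [^]\<^bsub>G\<^esub> p = y)"

lemma ptorsion_freeD:
  "ptorsion_free p G \<Longrightarrow> x \<in> carrier G \<Longrightarrow> x [^]\<^bsub>G\<^esub> p = \<one>\<^bsub>G\<^esub> \<Longrightarrow> x = \<one>\<^bsub>G\<^esub>"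
  by (simp add: ptorsion_free_def)

lemma pdivisibleE:
  assumes "pdivisible p G" "y \<in> carrier G"
  obtains x where "x \<in> carrier G" "x [^]\<^bsub>G\<^esub> p = y"
  using assms by (auto simp: pdivisible_def)

lemma upd_iff_ptorsion_free_pdivisible:
  fixes G (structure)
  assumes "comm_group G"
  shows "upd p G \<longleftrightarrow> ptorsion_free p G \<and> pdivisible p G"
proof -
  interpret comm_group G by fact
  have "inj_on (\<lambda>x. x [^] p) (carrier G) \<longleftrightarrow> ptorsion_free p G"
  proof
    assume "inj_on (\<lambda>x. x [^] p) (carrier G)"
    then show "ptorsion_free p G"
      unfolding ptorsion_free_def using inj_onD[of _ _ _ \<one>] by fastforce
  next
    assume tf: "ptorsion_free p G"
    show "inj_on (\<lambda>x. x [^] p) (carrier G)"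
    proof (rule inj_onI)
      fix x y
      assume xy: "x \<in> carrier G" "y \<in> carrier G" "x [^] p = y [^] p"
      then have "(x \<otimes> inv y) [^] p = \<one>"
        by (simp add: nat_pow_distrib nat_pow_inv)
      then have "x \<otimes> inv y = \<one>"
        using tf xy by (simp add: ptorsion_freeD)
      then show "x = y"
        using xy by (metis inv_solve_right' l_one one_closed)
    qed
  qed
  moreover have "(\<lambda>x. x [^] p) ` carrier G = carrier G \<longleftrightarrow> pdivisible p G"
    unfolding pdivisible_def by (auto simp: image_iff) (metis image_iff)
  ultimately show ?thesis
    unfolding upd_def bij_betw_def by blast
qed

lemma normop_one_minus_comp_is_pow:
  assumes G: "comm_group G" and K: "group K" and g: "g \<in> hom K G" and h: "h \<in> hom G K"
    and K_div: "pdivisible p K"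
    and x: "x \<in> carrier G"
  shows "\<exists>w\<in>carrier G. normop p G (one_minus G (g \<circ> h)) x = w [^]\<^bsub>G\<^esub> p"
proof -
  interpret comm_group_endo G "g \<circ> h"
    by (intro comm_group_endo.intro comm_group_endo_axioms.intro G hom_compose[OF h g])
  obtain z where z: "z \<in> carrier G"
    "normop p G (one_minus G (g \<circ> h)) x = x [^]\<^bsub>G\<^esub> p \<otimes>\<^bsub>G\<^esub> g (h z)"
    using normop_one_minus_eq_pow_mult[OF x] by auto
  obtain k where k: "k \<in> carrier K" "k [^]\<^bsub>K\<^esub> p = h z"
    using K_div hom_in_carrier[OF h z(1)] by (rule pdivisibleE)
  have gk: "g k \<in> carrier G"
    using hom_in_carrier[OF g k(1)] .
  have "normop p G (one_minus G (g \<circ> h)) x = x [^]\<^bsub>G\<^esub> p \<otimes>\<^bsub>G\<^esub> g k [^]\<^bsub>G\<^esub> p"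
    using z(2) k(2) hom_nat_pow[OF g k(1) K is_group, of p] by simp
  also have "\<dots> = (x \<otimes>\<^bsub>G\<^esub> g k) [^]\<^bsub>G\<^esub> p"
    using x gk by (simp add: nat_pow_distrib)
  finally show ?thesis
    using x gk by blast
qed

lemma subset_image_funpow: "S \<subseteq> f ` S \<Longrightarrow> S \<subseteq> (f ^^ n) ` S"
proof (induction n)
  case (Suc n)
  then have "S \<subseteq> (f ^^ n) ` (f ` S)"
    by (meson dual_order.trans image_mono)
  then show ?case
    by (simp add: image_comp funpow_swap1[symmetric] comp_def)
qed simp

locale exact_seq4 =
  A: comm_group A + B: comm_group B + C: comm_group C + D: comm_group D
  for A B C D and f g h +
  assumes f_hom: "f \<in> hom A B" and g_hom: "g \<in> hom B C" and h_hom: "h \<in> hom C D"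
    and exact_B: "exact_at A B C f g" and exact_C: "exact_at B C D g h"
begin

sublocale f: group_hom A B f
  by unfold_locales (rule f_hom)

sublocale g: group_hom B C g
  by unfold_locales (rule g_hom)

sublocale h: group_hom C D h
  by unfold_locales (rule h_hom)

lemma g_f [simp]: "a \<in> carrier A \<Longrightarrow> g (f a) = \<one>\<^bsub>C\<^esub>"
  using exact_B unfolding exact_at_def by blast

lemma h_g [simp]: "b \<in> carrier B \<Longrightarrow> h (g b) = \<one>\<^bsub>D\<^esub>"
  using exact_C unfolding exact_at_def by blast

lemma kernel_g:
  assumes "b \<in> carrier B" "g b = \<one>\<^bsub>C\<^esub>"
  obtains a where "a \<in> carrier A" "b = f a"
  using assms exact_B unfolding exact_at_def by blast

lemma kernel_h:
  assumes "c \<in> carrier C" "h c = \<one>\<^bsub>D\<^esub>"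
  obtains b where "b \<in> carrier B" "c = g b"
  using assms exact_C unfolding exact_at_def by blast

lemma torsion_lift:
  assumes A_div: "pdivisible p A" and D_tf: "ptorsion_free p D"
    and c: "c \<in> carrier C" "c [^]\<^bsub>C\<^esub> p = \<one>\<^bsub>C\<^esub>"
  obtains b where "b \<in> carrier B" "b [^]\<^bsub>B\<^esub> p = \<one>\<^bsub>B\<^esub>" "g b = c"
proof -
  have "h c [^]\<^bsub>D\<^esub> p = \<one>\<^bsub>D\<^esub>"
    using c by (simp flip: h.hom_nat_pow)
  then have "h c = \<one>\<^bsub>D\<^esub>"
    using D_tf c by (simp add: ptorsion_freeD)
  with c(1) obtain b0 where b0: "b0 \<in> carrier B" "c = g b0"
    by (rule kernel_h)
  have "g (b0 [^]\<^bsub>B\<^esub> p) = \<one>\<^bsub>C\<^esub>"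
    using b0 c by (simp add: g.hom_nat_pow)
  with B.nat_pow_closed[OF b0(1)] obtain a where a: "a \<in> carrier A" "b0 [^]\<^bsub>B\<^esub> p = f a"
    by (rule kernel_g)
  obtain a' where a': "a' \<in> carrier A" "a' [^]\<^bsub>A\<^esub> p = a"
    using A_div a(1) by (rule pdivisibleE)
  show thesis
  proof
    show "b0 \<otimes>\<^bsub>B\<^esub> inv\<^bsub>B\<^esub> f a' \<in> carrier B"
      using b0 a' by simp
    show "(b0 \<otimes>\<^bsub>B\<^esub> inv\<^bsub>B\<^esub> f a') [^]\<^bsub>B\<^esub> p = \<one>\<^bsub>B\<^esub>"
      using b0 a a' by (simp add: B.nat_pow_distrib B.nat_pow_inv flip: f.hom_nat_pow)
    show "g (b0 \<otimes>\<^bsub>B\<^esub> inv\<^bsub>B\<^esub> f a') = c"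
      using b0 a' by simp
  qed
qed

lemma eq_image_mult_pow:
  assumes C_div: "pdivisible p C" and D_tf: "ptorsion_free p D" and b: "b \<in> carrier B"
  obtains a w where "a \<in> carrier A" "w \<in> carrier B" "b = f a \<otimes>\<^bsub>B\<^esub> w [^]\<^bsub>B\<^esub> p"
proof -
  obtain c where c: "c \<in> carrier C" "c [^]\<^bsub>C\<^esub> p = g b"
    using C_div g.hom_closed[OF b] by (rule pdivisibleE)
  have "h c [^]\<^bsub>D\<^esub> p = \<one>\<^bsub>D\<^esub>"
    using b c by (simp flip: h.hom_nat_pow)
  then have "h c = \<one>\<^bsub>D\<^esub>"
    using D_tf c by (simp add: ptorsion_freeD)
  with c(1) obtain w where w: "w \<in> carrier B" "c = g w"
    by (rule kernel_h)
  have "b \<otimes>\<^bsub>B\<^esub> inv\<^bsub>B\<^esub> (w [^]\<^bsub>B\<^esub> p) \<in> carrier B"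
    using b w by simp
  moreover have "g (b \<otimes>\<^bsub>B\<^esub> inv\<^bsub>B\<^esub> (w [^]\<^bsub>B\<^esub> p)) = \<one>\<^bsub>C\<^esub>"
    using b c w by (simp add: g.hom_nat_pow)
  ultimately obtain a where a: "a \<in> carrier A" "b \<otimes>\<^bsub>B\<^esub> inv\<^bsub>B\<^esub> (w [^]\<^bsub>B\<^esub> p) = f a"
    by (rule kernel_g)
  then have "b = f a \<otimes>\<^bsub>B\<^esub> w [^]\<^bsub>B\<^esub> p"
    using b w by (simp add: B.inv_solve_right')
  then show thesis
    using a w that by blast
qed

end

section \<open>Unique divisibility spreads around an exact \<open>\<KK>\<close>-module\<close>

text \<open>An exact \<open>\<KK>\<close>-module with its grading forgotten: the divisibility arguments never use
  the grading, and without it the indices 0 and 1 play symmetric roles.\<close>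

locale exact_kdiagram =
  fixes p :: nat and G0 G1 G2 and f01 f10 f12 f21 f02 f20
  assumes prime: "prime p"
    and comm_group_0: "comm_group G0" and comm_group_1: "comm_group G1"
    and comm_group_2: "comm_group G2"
    and hom_01: "f01 \<in> hom G1 G0" and hom_10: "f10 \<in> hom G0 G1"
    and hom_12: "f12 \<in> hom G2 G1" and hom_21: "f21 \<in> hom G1 G2"
    and hom_02: "f02 \<in> hom G2 G0" and hom_20: "f20 \<in> hom G0 G2"
    and norm_0: "\<forall>x\<in>carrier G0. f01 (f10 x) = normop p G0 (one_minus G0 (f02 \<circ> f20)) x"
    and norm_1: "\<forall>x\<in>carrier G1. f10 (f01 x) = normop p G1 (one_minus G1 (f12 \<circ> f21)) x"
    and norm_2: "\<forall>x\<in>carrier G2. normop p G2 (one_minus G2 (f20 \<circ> f02)) x \<otimes>\<^bsub>G2\<^esub>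
      normop p G2 (one_minus G2 (f21 \<circ> f12)) x = x [^]\<^bsub>G2\<^esub> p"
    and exact_up_1: "exact_at G0 G1 G2 f10 f21" and exact_up_2: "exact_at G1 G2 G0 f21 f02"
    and exact_up_0: "exact_at G2 G0 G1 f02 f10" and exact_dn_2: "exact_at G0 G2 G1 f20 f12"
    and exact_dn_1: "exact_at G2 G1 G0 f12 f01" and exact_dn_0: "exact_at G1 G0 G2 f01 f20"
begin

sublocale g0: comm_group G0 by (rule comm_group_0)
sublocale g1: comm_group G1 by (rule comm_group_1)
sublocale g2: comm_group G2 by (rule comm_group_2)

sublocale h01: group_hom G1 G0 f01 by unfold_locales (rule hom_01)
sublocale h10: group_hom G0 G1 f10 by unfold_locales (rule hom_10)
sublocale h12: group_hom G2 G1 f12 by unfold_locales (rule hom_12)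
sublocale h21: group_hom G1 G2 f21 by unfold_locales (rule hom_21)
sublocale h02: group_hom G2 G0 f02 by unfold_locales (rule hom_02)
sublocale h20: group_hom G0 G2 f20 by unfold_locales (rule hom_20)

text \<open>The six windows of length four in the two exact cycles
  \<open>G0 \<rightarrow> G1 \<rightarrow> G2 \<rightarrow> G0\<close> (\<open>up\<close>) and \<open>G0 \<rightarrow> G2 \<rightarrow> G1 \<rightarrow> G0\<close> (\<open>dn\<close>), named by their first group.\<close>

sublocale up0: exact_seq4 G0 G1 G2 G0 f10 f21 f02
  by unfold_locales (rule hom_10 hom_21 hom_02 exact_up_1 exact_up_2)+
sublocale up1: exact_seq4 G1 G2 G0 G1 f21 f02 f10
  by unfold_locales (rule hom_21 hom_02 hom_10 exact_up_2 exact_up_0)+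
sublocale up2: exact_seq4 G2 G0 G1 G2 f02 f10 f21
  by unfold_locales (rule hom_02 hom_10 hom_21 exact_up_0 exact_up_1)+
sublocale dn0: exact_seq4 G0 G2 G1 G0 f20 f12 f01
  by unfold_locales (rule hom_20 hom_12 hom_01 exact_dn_2 exact_dn_1)+
sublocale dn2: exact_seq4 G2 G1 G0 G2 f12 f01 f20
  by unfold_locales (rule hom_12 hom_01 hom_20 exact_dn_1 exact_dn_0)+
sublocale dn1: exact_seq4 G1 G0 G2 G1 f01 f20 f12
  by unfold_locales (rule hom_01 hom_20 hom_12 exact_dn_0 exact_dn_2)+

sublocale e0: comm_group_endo G0 "f02 \<circ> f20"
  by unfold_locales (rule hom_compose[OF hom_20 hom_02])
sublocale e1: comm_group_endo G1 "f12 \<circ> f21"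
  by unfold_locales (rule hom_compose[OF hom_21 hom_12])
sublocale e2: comm_group_endo G2 "f20 \<circ> f02"
  by unfold_locales (rule hom_compose[OF hom_02 hom_20])
sublocale e2': comm_group_endo G2 "f21 \<circ> f12"
  by unfold_locales (rule hom_compose[OF hom_12 hom_21])

lemma kdiagram_swap: "exact_kdiagram p G1 G0 G2 f10 f01 f02 f20 f12 f21"
proof -
  have "\<forall>x\<in>carrier G2. normop p G2 (one_minus G2 (f21 \<circ> f12)) x \<otimes>\<^bsub>G2\<^esub>
      normop p G2 (one_minus G2 (f20 \<circ> f02)) x = x [^]\<^bsub>G2\<^esub> p"
    using norm_2 by (simp add: g2.m_comm)
  then show ?thesis
    unfolding exact_kdiagram_def
    using prime comm_group_0 comm_group_1 comm_group_2 hom_01 hom_10 hom_12 hom_21 hom_02 hom_20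
      norm_0 norm_1 exact_up_1 exact_up_2 exact_up_0 exact_dn_2 exact_dn_1 exact_dn_0
    by blast
qed

context
  assumes tf0: "ptorsion_free p G0" and dv0: "pdivisible p G0"
begin

lemma torsion_2_in_image_21_12:
  assumes y: "y \<in> carrier G2" "y [^]\<^bsub>G2\<^esub> p = \<one>\<^bsub>G2\<^esub>"
  obtains w where "w \<in> carrier G2" "w [^]\<^bsub>G2\<^esub> p = \<one>\<^bsub>G2\<^esub>" "f21 (f12 w) = y"
proof -
  obtain m where m: "m \<in> carrier G1" "m [^]\<^bsub>G1\<^esub> p = \<one>\<^bsub>G1\<^esub>" "f21 m = y"
    by (rule up0.torsion_lift[OF dv0 tf0 y])
  obtain w where "w \<in> carrier G2" "w [^]\<^bsub>G2\<^esub> p = \<one>\<^bsub>G2\<^esub>" "f12 w = m"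
    by (rule dn0.torsion_lift[OF dv0 tf0 m(1,2)])
  with m(3) show thesis
    using that by blast
qed

lemma funpow_21_12_torsion_eq_one:
  assumes w: "w \<in> carrier G2" "w [^]\<^bsub>G2\<^esub> p = \<one>\<^bsub>G2\<^esub>"
  shows "((f21 \<circ> f12) ^^ (p - 1)) w = \<one>\<^bsub>G2\<^esub>"
proof -
  have "f02 w [^]\<^bsub>G0\<^esub> p = \<one>\<^bsub>G0\<^esub>"
    using w by (simp flip: h02.hom_nat_pow)
  then have "f02 w = \<one>\<^bsub>G0\<^esub>"
    using tf0 w by (simp add: ptorsion_freeD)
  then have "normop p G2 (one_minus G2 (f20 \<circ> f02)) w = \<one>\<^bsub>G2\<^esub>"
    using w by (simp add: e2.normop_one_minus_of_fixed)
  then have "normop p G2 (one_minus G2 (f21 \<circ> f12)) w = \<one>\<^bsub>G2\<^esub>"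
    using norm_2 w by auto
  then show ?thesis
    by (rule e2'.funpow_eq_one_if_normop_one_minus_eq_one[OF prime w])
qed

lemma ptorsion_free_2_of_0: "ptorsion_free p G2"
proof -
  let ?T = "{y \<in> carrier G2. y [^]\<^bsub>G2\<^esub> p = \<one>\<^bsub>G2\<^esub>}"
  have "?T \<subseteq> (f21 \<circ> f12) ` ?T"
  proof
    fix y
    assume "y \<in> ?T"
    then obtain w where "w \<in> carrier G2" "w [^]\<^bsub>G2\<^esub> p = \<one>\<^bsub>G2\<^esub>" "f21 (f12 w) = y"
      using torsion_2_in_image_21_12 by blast
    then show "y \<in> (f21 \<circ> f12) ` ?T"
      by force
  qed
  then have "?T \<subseteq> ((f21 \<circ> f12) ^^ (p - 1)) ` ?T"
    by (rule subset_image_funpow)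
  then show ?thesis
    unfolding ptorsion_free_def using funpow_21_12_torsion_eq_one by auto
qed

lemma ptorsion_free_1_of_0: "ptorsion_free p G1"
  unfolding ptorsion_free_def
proof (intro ballI impI)
  fix m
  assume m: "m \<in> carrier G1" "m [^]\<^bsub>G1\<^esub> p = \<one>\<^bsub>G1\<^esub>"
  obtain w where w: "w \<in> carrier G2" "w [^]\<^bsub>G2\<^esub> p = \<one>\<^bsub>G2\<^esub>" "f12 w = m"
    by (rule dn0.torsion_lift[OF dv0 tf0 m])
  have "w = \<one>\<^bsub>G2\<^esub>"
    by (rule ptorsion_freeD[OF ptorsion_free_2_of_0 w(1,2)])
  then show "m = \<one>\<^bsub>G1\<^esub>"
    using w(3) by simp
qed

lemma image_21_12_mult_pow:
  assumes y: "y \<in> carrier G2"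
  shows "\<exists>w\<in>carrier G2. \<exists>z\<in>carrier G2. y = (f21 \<circ> f12) w \<otimes>\<^bsub>G2\<^esub> z [^]\<^bsub>G2\<^esub> p"
proof -
  obtain m z where mz: "m \<in> carrier G1" "z \<in> carrier G2" "y = f21 m \<otimes>\<^bsub>G2\<^esub> z [^]\<^bsub>G2\<^esub> p"
    by (rule up1.eq_image_mult_pow[OF dv0 ptorsion_free_1_of_0 y])
  obtain w n where wn: "w \<in> carrier G2" "n \<in> carrier G1" "m = f12 w \<otimes>\<^bsub>G1\<^esub> n [^]\<^bsub>G1\<^esub> p"
    by (rule dn2.eq_image_mult_pow[OF dv0 ptorsion_free_2_of_0 mz(1)])
  have "y = (f21 \<circ> f12) w \<otimes>\<^bsub>G2\<^esub> (f21 n \<otimes>\<^bsub>G2\<^esub> z) [^]\<^bsub>G2\<^esub> p"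
    using mz wn by (simp add: h21.hom_nat_pow g2.nat_pow_distrib g2.m_assoc)
  moreover have "f21 n \<otimes>\<^bsub>G2\<^esub> z \<in> carrier G2"
    using mz wn by simp
  ultimately show ?thesis
    using wn(1) by blast
qed

lemma funpow_21_12_is_pow:
  assumes w: "w \<in> carrier G2"
  shows "\<exists>q\<in>carrier G2. ((f21 \<circ> f12) ^^ (p - 1)) w = q [^]\<^bsub>G2\<^esub> p"
proof -
  obtain u where u: "u \<in> carrier G2" "normop p G2 (one_minus G2 (f20 \<circ> f02)) w = u [^]\<^bsub>G2\<^esub> p"
    using normop_one_minus_comp_is_pow[OF comm_group_2 g0.is_group hom_20 hom_02 dv0 w] by blast
  have "u [^]\<^bsub>G2\<^esub> p \<otimes>\<^bsub>G2\<^esub> normop p G2 (one_minus G2 (f21 \<circ> f12)) w = w [^]\<^bsub>G2\<^esub> p"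
    using norm_2 w u(2) by auto
  then have "normop p G2 (one_minus G2 (f21 \<circ> f12)) w = inv\<^bsub>G2\<^esub> (u [^]\<^bsub>G2\<^esub> p) \<otimes>\<^bsub>G2\<^esub> w [^]\<^bsub>G2\<^esub> p"
    using w u(1) by (subst g2.inv_solve_left) auto
  also have "\<dots> = (w \<otimes>\<^bsub>G2\<^esub> inv\<^bsub>G2\<^esub> u) [^]\<^bsub>G2\<^esub> p"
    using w u(1) by (simp add: g2.nat_pow_distrib g2.nat_pow_inv g2.m_comm)
  finally have "normop p G2 (one_minus G2 (f21 \<circ> f12)) w = (w \<otimes>\<^bsub>G2\<^esub> inv\<^bsub>G2\<^esub> u) [^]\<^bsub>G2\<^esub> p" .
  moreover have "w \<otimes>\<^bsub>G2\<^esub> inv\<^bsub>G2\<^esub> u \<in> carrier G2"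
    using w u(1) by simp
  ultimately show ?thesis
    by (rule e2'.funpow_is_pow_if_normop_one_minus_is_pow[OF prime w, rotated])
qed

lemma pdivisible_2_of_0: "pdivisible p G2"
  unfolding pdivisible_def
proof
  fix y
  assume y: "y \<in> carrier G2"
  obtain w z where wz: "w \<in> carrier G2" "z \<in> carrier G2"
    "y = ((f21 \<circ> f12) ^^ (p - 1)) w \<otimes>\<^bsub>G2\<^esub> z [^]\<^bsub>G2\<^esub> p"
    using e2'.funpow_image_mult_pow[OF image_21_12_mult_pow y] by blast
  obtain q where q: "q \<in> carrier G2" "((f21 \<circ> f12) ^^ (p - 1)) w = q [^]\<^bsub>G2\<^esub> p"
    using funpow_21_12_is_pow[OF wz(1)] by blast
  have "y = (q \<otimes>\<^bsub>G2\<^esub> z) [^]\<^bsub>G2\<^esub> p"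
    using wz q by (simp add: g2.nat_pow_distrib)
  moreover have "q \<otimes>\<^bsub>G2\<^esub> z \<in> carrier G2"
    using q wz by simp
  ultimately show "\<exists>x\<in>carrier G2. x [^]\<^bsub>G2\<^esub> p = y"
    by metis
qed

end

lemma upd_2_of_upd_0: "upd p G0 \<Longrightarrow> upd p G2"
  using ptorsion_free_2_of_0 pdivisible_2_of_0
  by (simp add: upd_iff_ptorsion_free_pdivisible comm_group_0 comm_group_2)

context
  assumes tf2: "ptorsion_free p G2" and dv2: "pdivisible p G2"
begin

lemma ptorsion_free_0_of_2: "ptorsion_free p G0"
  unfolding ptorsion_free_def
proof (intro ballI impI)
  fix x
  assume x: "x \<in> carrier G0" "x [^]\<^bsub>G0\<^esub> p = \<one>\<^bsub>G0\<^esub>"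
  obtain m where m: "m \<in> carrier G1" "m [^]\<^bsub>G1\<^esub> p = \<one>\<^bsub>G1\<^esub>" "f01 m = x"
    by (rule dn2.torsion_lift[OF dv2 tf2 x])
  obtain x' where x': "x' \<in> carrier G0" "x' [^]\<^bsub>G0\<^esub> p = \<one>\<^bsub>G0\<^esub>" "f10 x' = m"
    by (rule up2.torsion_lift[OF dv2 tf2 m(1,2)])
  have "f20 x' [^]\<^bsub>G2\<^esub> p = \<one>\<^bsub>G2\<^esub>"
    using x' by (simp flip: h20.hom_nat_pow)
  then have "f20 x' = \<one>\<^bsub>G2\<^esub>"
    using tf2 x' by (simp add: ptorsion_freeD)
  then have "normop p G0 (one_minus G0 (f02 \<circ> f20)) x' = x' [^]\<^bsub>G0\<^esub> p"
    using x' by (simp add: e0.normop_one_minus_of_fixed)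
  then show "x = \<one>\<^bsub>G0\<^esub>"
    using norm_0 x' m by auto
qed

lemma ptorsion_free_1_of_2: "ptorsion_free p G1"
  unfolding ptorsion_free_def
proof (intro ballI impI)
  fix m
  assume m: "m \<in> carrier G1" "m [^]\<^bsub>G1\<^esub> p = \<one>\<^bsub>G1\<^esub>"
  obtain x where x: "x \<in> carrier G0" "x [^]\<^bsub>G0\<^esub> p = \<one>\<^bsub>G0\<^esub>" "f10 x = m"
    by (rule up2.torsion_lift[OF dv2 tf2 m])
  have "x = \<one>\<^bsub>G0\<^esub>"
    by (rule ptorsion_freeD[OF ptorsion_free_0_of_2 x(1,2)])
  then show "m = \<one>\<^bsub>G1\<^esub>"
    using x(3) by simp
qed

lemma pdivisible_0_of_2: "pdivisible p G0"
  unfolding pdivisible_def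
proof
  fix x
  assume x: "x \<in> carrier G0"
  obtain m y where my: "m \<in> carrier G1" "y \<in> carrier G0" "x = f01 m \<otimes>\<^bsub>G0\<^esub> y [^]\<^bsub>G0\<^esub> p"
    by (rule dn1.eq_image_mult_pow[OF dv2 ptorsion_free_1_of_2 x])
  obtain x' n where x'n: "x' \<in> carrier G0" "n \<in> carrier G1" "m = f10 x' \<otimes>\<^bsub>G1\<^esub> n [^]\<^bsub>G1\<^esub> p"
    by (rule up0.eq_image_mult_pow[OF dv2 ptorsion_free_0_of_2 my(1)])
  obtain u where u: "u \<in> carrier G0" "normop p G0 (one_minus G0 (f02 \<circ> f20)) x' = u [^]\<^bsub>G0\<^esub> p"
    using normop_one_minus_comp_is_pow[OF comm_group_0 g2.is_group hom_02 hom_20 dv2 x'n(1)] by blast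
  have "f01 (f10 x') = u [^]\<^bsub>G0\<^esub> p"
    using norm_0 x'n(1) u(2) by auto
  then have "x = (u \<otimes>\<^bsub>G0\<^esub> f01 n \<otimes>\<^bsub>G0\<^esub> y) [^]\<^bsub>G0\<^esub> p"
    using my x'n u(1) by (simp add: h01.hom_nat_pow g0.nat_pow_distrib g0.m_assoc)
  moreover have "u \<otimes>\<^bsub>G0\<^esub> f01 n \<otimes>\<^bsub>G0\<^esub> y \<in> carrier G0"
    using my x'n u by simp
  ultimately show "\<exists>z\<in>carrier G0. z [^]\<^bsub>G0\<^esub> p = x"
    by metis
qed

end

lemma upd_0_of_upd_2: "upd p G2 \<Longrightarrow> upd p G0"
  using ptorsion_free_0_of_2 pdivisible_0_of_2
  by (simp add: upd_iff_ptorsion_free_pdivisible comm_group_0 comm_group_2)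

lemma upd_all:
  assumes "upd p G0 \<or> upd p G1 \<or> upd p G2"
  shows "upd p G0 \<and> upd p G1 \<and> upd p G2"
proof -
  interpret swapped: exact_kdiagram p G1 G0 G2 f10 f01 f02 f20 f12 f21
    by (rule kdiagram_swap)
  show ?thesis
    using assms upd_2_of_upd_0 upd_0_of_upd_2 swapped.upd_2_of_upd_0 swapped.upd_0_of_upd_2
    by blast
qed

end

lemma kmodule_kdiagram:
  assumes "prime p" "kmodule p M" "exact_kmodule M"
  shows "exact_kdiagram p (M0 M) (M1 M) (M2 M) (a01 M) (a10 M) (a12 M) (a21 M) (a02 M) (a20 M)"
  using assms
  unfolding exact_kdiagram_def kmodule_def exact_kmodule_def graded_group_def gpres_def grev_def
  by blast

section \<open>Graded groups\<close>

lemma subgroup_nat_pow_closed: "subgroup H G \<Longrightarrow> x \<in> H \<Longrightarrow> x [^]\<^bsub>G\<^esub> (n::nat) \<in> H"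
  by (induction n) (simp_all add: subgroup.one_closed subgroup.m_closed)

locale graded = comm_group G for G :: "('a, 'm) gmonoid_scheme" (structure) +
  assumes ev_subgroup: "subgroup (ev_part G) G" and od_subgroup: "subgroup (od_part G) G"
    and unique_decomp:
      "\<forall>x\<in>carrier G. \<exists>!ab. fst ab \<in> ev_part G \<and> snd ab \<in> od_part G \<and> x = fst ab \<otimes> snd ab"

lemma graded_group_iff_graded: "graded_group G \<longleftrightarrow> graded G"
  by (auto simp: graded_group_def graded_def graded_axioms_def)

context graded
begin

lemma ev_carrier [simp]: "a \<in> ev_part G \<Longrightarrow> a \<in> carrier G"
  using subgroup.mem_carrier[OF ev_subgroup] .

lemma od_carrier [simp]: "b \<in> od_part G \<Longrightarrow> b \<in> carrier G"
  using subgroup.mem_carrier[OF od_subgroup] .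

lemma one_ev [simp]: "\<one> \<in> ev_part G" and one_od [simp]: "\<one> \<in> od_part G"
  by (simp_all add: subgroup.one_closed[OF ev_subgroup] subgroup.one_closed[OF od_subgroup])

lemma decomp:
  assumes "x \<in> carrier G"
  obtains a b where "a \<in> ev_part G" "b \<in> od_part G" "x = a \<otimes> b"
  using unique_decomp assms by (metis (no_types, lifting))

lemma decomp_eq:
  assumes "a \<in> ev_part G" "b \<in> od_part G" "a' \<in> ev_part G" "b' \<in> od_part G"
    and "a \<otimes> b = a' \<otimes> b'"
  shows "a = a' \<and> b = b'"
proof -
  have "\<exists>!ab. fst ab \<in> ev_part G \<and> snd ab \<in> od_part G \<and> a \<otimes> b = fst ab \<otimes> snd ab"
    using unique_decomp assms(1,2) by simp
  then have "(a, b) = (a', b')"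
    using assms by (metis fst_conv snd_conv)
  then show ?thesis
    by simp
qed

lemma ev_od_eq_one:
  assumes "a \<in> ev_part G" "b \<in> od_part G" "a \<otimes> b = \<one>"
  shows "a = \<one> \<and> b = \<one>"
  using decomp_eq[of a b \<one> \<one>] assms by simp

lemma nat_pow_gpres: "gpres G G (\<lambda>x. x [^] (n::nat))"
  unfolding gpres_def
  using subgroup_nat_pow_closed[OF ev_subgroup] subgroup_nat_pow_closed[OF od_subgroup]
  by (auto intro!: homI simp: nat_pow_distrib)

end

lemma gpres_id: "gpres G G (\<lambda>x. x)"
  by (simp add: gpres_def hom_def)

lemma
  assumes G: "graded G" and H: "graded H" and g: "gpres G H g" and inj: "inj_on g (carrier G)"
    and x: "x \<in> carrier G"
  shows gpres_inj_on_reflects_ev: "g x \<in> ev_part H \<Longrightarrow> x \<in> ev_part G"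
    and gpres_inj_on_reflects_od: "g x \<in> od_part H \<Longrightarrow> x \<in> od_part G"
proof -
  interpret G: graded G by (rule G)
  interpret H: graded H by (rule H)
  have g_hom: "g \<in> hom G H" and g_ev: "g ` ev_part G \<subseteq> ev_part H" and g_od: "g ` od_part G \<subseteq> od_part H"
    using g by (simp_all add: gpres_def)
  have g_one: "g \<one>\<^bsub>G\<^esub> = \<one>\<^bsub>H\<^esub>"
    using hom_one[OF g_hom G.is_group H.is_group] .
  obtain a b where ab: "a \<in> ev_part G" "b \<in> od_part G" "x = a \<otimes>\<^bsub>G\<^esub> b"
    using G.decomp[OF x] .
  have gx: "g x = g a \<otimes>\<^bsub>H\<^esub> g b" and gab: "g a \<in> ev_part H" "g b \<in> od_part H"
    using ab g_ev g_od hom_mult[OF g_hom] by auto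
  show "x \<in> ev_part G" if "g x \<in> ev_part H"
  proof -
    have "g x \<otimes>\<^bsub>H\<^esub> \<one>\<^bsub>H\<^esub> = g a \<otimes>\<^bsub>H\<^esub> g b"
      using gx hom_in_carrier[OF g_hom x] by simp
    then have "g x = g a \<and> \<one>\<^bsub>H\<^esub> = g b"
      by (rule H.decomp_eq[OF that H.one_od gab])
    then have "b = \<one>\<^bsub>G\<^esub>"
      using inj_onD[OF inj, of b "\<one>\<^bsub>G\<^esub>"] ab(2) g_one by simp
    then show ?thesis
      using ab by simp
  qed
  show "x \<in> od_part G" if "g x \<in> od_part H"
  proof -
    have "\<one>\<^bsub>H\<^esub> \<otimes>\<^bsub>H\<^esub> g x = g a \<otimes>\<^bsub>H\<^esub> g b"
      using gx hom_in_carrier[OF g_hom x] by simp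
    then have "\<one>\<^bsub>H\<^esub> = g a \<and> g x = g b"
      by (rule H.decomp_eq[OF H.one_ev that gab])
    then have "a = \<one>\<^bsub>G\<^esub>"
      using inj_onD[OF inj, of a "\<one>\<^bsub>G\<^esub>"] ab(1) g_one by simp
    then show ?thesis
      using ab by simp
  qed
qed

lemma gpres_inv_into:
  assumes G: "graded G" and H: "graded H" and g: "gpres G H g"
    and bij: "bij_betw g (carrier G) (carrier H)"
  shows "gpres H G (inv_into (carrier G) g)"
proof -
  interpret G: graded G by (rule G)
  have g_hom: "g \<in> hom G H"
    using g by (simp add: gpres_def)
  have "inv_into (carrier G) g \<in> hom H G"
    using G.iso_set_sym[OF isoI[OF g_hom bij]] by (rule iso_imp_homomorphism)
  moreover have "inv_into (carrier G) g y \<in> ev_part G" if "y \<in> ev_part H" for y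
    using gpres_inj_on_reflects_ev[OF G H g] bij that graded.ev_carrier[OF H]
    by (metis bij_betw_def bij_betw_inv_into_right inv_into_into)
  moreover have "inv_into (carrier G) g y \<in> od_part G" if "y \<in> od_part H" for y
    using gpres_inj_on_reflects_od[OF G H g] bij that graded.od_carrier[OF H]
    by (metis bij_betw_def bij_betw_inv_into_right inv_into_into)
  ultimately show ?thesis
    by (auto simp: gpres_def)
qed

lemma gpres_comp: "gpres G H f \<Longrightarrow> gpres H K g \<Longrightarrow> gpres G K (g \<circ> f)"
  by (auto simp: gpres_def hom_compose image_subset_iff)

lemma grev_comp: "grev G H f \<Longrightarrow> grev H K g \<Longrightarrow> gpres G K (g \<circ> f)"
  by (auto simp: gpres_def grev_def hom_compose image_subset_iff)

lemma gpres_one_minus: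
  assumes G: "graded G" and f: "gpres G G f"
  shows "gpres G G (one_minus G f)"
proof -
  interpret graded G by (rule G)
  interpret comm_group_endo G f
    using f by unfold_locales (simp add: gpres_def)
  have "one_minus G f \<in> hom G G"
    by (intro homI) (simp_all add: one_minus_def inv_mult m_ac)
  moreover have "one_minus G f x \<in> T" if "subgroup T G" "f ` T \<subseteq> T" "x \<in> T" for T x
    using that by (auto simp: one_minus_def subgroup.m_closed subgroup.m_inv_closed)
  ultimately show ?thesis
    using f ev_subgroup od_subgroup by (auto simp: gpres_def)
qed

lemma gsum_simps [simp]:
  "carrier (gsum G H) = carrier G \<times> carrier H"
  "u \<otimes>\<^bsub>gsum G H\<^esub> v = (fst u \<otimes>\<^bsub>G\<^esub> fst v, snd u \<otimes>\<^bsub>H\<^esub> snd v)"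
  "\<one>\<^bsub>gsum G H\<^esub> = (\<one>\<^bsub>G\<^esub>, \<one>\<^bsub>H\<^esub>)"
  "ev_part (gsum G H) = ev_part G \<times> ev_part H"
  "od_part (gsum G H) = od_part G \<times> od_part H"
  by (simp_all add: gsum_def)

lemma comm_group_gsum:
  assumes "comm_group G" "comm_group H"
  shows "comm_group (gsum G H)"
proof -
  interpret G: comm_group G by fact
  interpret H: comm_group H by fact
  show ?thesis
  proof (rule comm_groupI)
    fix x y z
    assume "x \<in> carrier (gsum G H)" "y \<in> carrier (gsum G H)" "z \<in> carrier (gsum G H)"
    then show "x \<otimes>\<^bsub>gsum G H\<^esub> y \<otimes>\<^bsub>gsum G H\<^esub> z = x \<otimes>\<^bsub>gsum G H\<^esub> (y \<otimes>\<^bsub>gsum G H\<^esub> z)"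
      by (auto simp: G.m_assoc H.m_assoc)
  next
    fix x y
    assume "x \<in> carrier (gsum G H)" "y \<in> carrier (gsum G H)"
    then show "x \<otimes>\<^bsub>gsum G H\<^esub> y = y \<otimes>\<^bsub>gsum G H\<^esub> x"
      by (auto simp: G.m_comm H.m_comm)
  next
    fix x
    assume "x \<in> carrier (gsum G H)"
    then show "\<exists>y\<in>carrier (gsum G H). y \<otimes>\<^bsub>gsum G H\<^esub> x = \<one>\<^bsub>gsum G H\<^esub>"
      by (intro bexI[of _ "(inv\<^bsub>G\<^esub> fst x, inv\<^bsub>H\<^esub> snd x)"]) auto
  qed auto
qed

lemma subgroup_gsum:
  assumes "comm_group G" "comm_group H" "subgroup A G" "subgroup B H"
  shows "subgroup (A \<times> B) (gsum G H)"
proof -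
  interpret G: comm_group G by fact
  interpret H: comm_group H by fact
  interpret S: comm_group "gsum G H"
    using comm_group_gsum assms(1,2) .
  have "inv\<^bsub>gsum G H\<^esub> (a, b) = (inv\<^bsub>G\<^esub> a, inv\<^bsub>H\<^esub> b)" if "a \<in> A" "b \<in> B" for a b
    using that assms(3,4) by (intro S.inv_equality) (auto dest: subgroup.mem_carrier)
  then show ?thesis
    using assms(3,4) by (intro subgroup.intro)
      (auto simp: subgroup.m_closed subgroup.one_closed subgroup.m_inv_closed dest: subgroup.subset)
qed

lemma graded_gsum:
  assumes G: "graded G" and H: "graded H"
  shows "graded (gsum G H)"
proof -
  interpret G: graded G by (rule G)
  interpret H: graded H by (rule H)
  interpret comm_group "gsum G H"
    using comm_group_gsum G.comm_group_axioms H.comm_group_axioms .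
  have "\<exists>!ab. fst ab \<in> ev_part G \<times> ev_part H \<and> snd ab \<in> od_part G \<times> od_part H \<and>
      x = (fst (fst ab) \<otimes>\<^bsub>G\<^esub> fst (snd ab), snd (fst ab) \<otimes>\<^bsub>H\<^esub> snd (snd ab))"
    if x: "x \<in> carrier G \<times> carrier H" for x
  proof -
    obtain a1 b1 where ab1: "a1 \<in> ev_part G" "b1 \<in> od_part G" "fst x = a1 \<otimes>\<^bsub>G\<^esub> b1"
      using x G.decomp by (metis mem_Times_iff)
    obtain a2 b2 where ab2: "a2 \<in> ev_part H" "b2 \<in> od_part H" "snd x = a2 \<otimes>\<^bsub>H\<^esub> b2"
      using x H.decomp by (metis mem_Times_iff)
    show ?thesis
    proof (rule ex1I[of _ "((a1, a2), (b1, b2))"])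
      show "fst ((a1, a2), b1, b2) \<in> ev_part G \<times> ev_part H \<and> snd ((a1, a2), b1, b2) \<in> od_part G \<times> od_part H
        \<and> x = (fst (fst ((a1, a2), b1, b2)) \<otimes>\<^bsub>G\<^esub> fst (snd ((a1, a2), b1, b2)),
               snd (fst ((a1, a2), b1, b2)) \<otimes>\<^bsub>H\<^esub> snd (snd ((a1, a2), b1, b2)))"
        using ab1 ab2 by (simp add: prod_eq_iff)
    next
      fix ab
      assume "fst ab \<in> ev_part G \<times> ev_part H \<and> snd ab \<in> od_part G \<times> od_part H \<and>
        x = (fst (fst ab) \<otimes>\<^bsub>G\<^esub> fst (snd ab), snd (fst ab) \<otimes>\<^bsub>H\<^esub> snd (snd ab))"
      then show "ab = ((a1, a2), b1, b2)"
        using G.decomp_eq[OF _ _ ab1(1,2)] H.decomp_eq[OF _ _ ab2(1,2)] ab1(3) ab2(3)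
        by (auto simp: prod_eq_iff)
    qed
  qed
  then show ?thesis
    using subgroup_gsum[OF G.comm_group_axioms H.comm_group_axioms] G.ev_subgroup H.ev_subgroup
      G.od_subgroup H.od_subgroup comm_group_axioms
    by (simp add: graded_def graded_axioms_def)
qed

lemma gshift_simps [simp]:
  "carrier (gshift G) = carrier G"
  "monoid.mult (gshift G) = monoid.mult G"
  "monoid.one (gshift G) = monoid.one G"
  "ev_part (gshift G) = od_part G"
  "od_part (gshift G) = ev_part G"
  by (simp_all add: gshift_def)

lemma gshift_inv [simp]: "inv\<^bsub>gshift G\<^esub> x = inv\<^bsub>G\<^esub> x"
  by (simp add: m_inv_def)

lemma gpres_gshift_iff: "gpres (gshift G) H g \<longleftrightarrow> grev G H g"
  by (auto simp: gpres_def grev_def hom_def)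

lemma subgroup_gshift: "subgroup A G \<Longrightarrow> subgroup A (gshift G)"
  by (rule subgroup.intro) (auto simp: subgroup.subset subgroup.m_closed subgroup.one_closed
      subgroup.m_inv_closed)

lemma graded_gshift:
  assumes G: "graded G"
  shows "graded (gshift G)"
proof -
  interpret G: graded G by (rule G)
  have "comm_group (gshift G)"
    by (rule comm_groupI) (auto simp: G.m_ac intro: G.l_inv_ex)
  moreover have "\<exists>!ab. fst ab \<in> od_part G \<and> snd ab \<in> ev_part G \<and> x = fst ab \<otimes>\<^bsub>G\<^esub> snd ab"
    if x: "x \<in> carrier G" for x
  proof -
    obtain a b where ab: "a \<in> ev_part G" "b \<in> od_part G" "x = a \<otimes>\<^bsub>G\<^esub> b"
      using G.decomp[OF x] .
    show ?thesis
    proof (rule ex1I[of _ "(b, a)"])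
      show "fst (b, a) \<in> od_part G \<and> snd (b, a) \<in> ev_part G \<and> x = fst (b, a) \<otimes>\<^bsub>G\<^esub> snd (b, a)"
        using ab by (simp add: G.m_comm)
    next
      fix ab'
      assume ab': "fst ab' \<in> od_part G \<and> snd ab' \<in> ev_part G \<and> x = fst ab' \<otimes>\<^bsub>G\<^esub> snd ab'"
      then have "snd ab' \<otimes>\<^bsub>G\<^esub> fst ab' = a \<otimes>\<^bsub>G\<^esub> b"
        using ab G.m_comm[of "fst ab'" "snd ab'"] by simp
      then have "snd ab' = a \<and> fst ab' = b"
        using G.decomp_eq ab' ab(1,2) by blast
      then show "ab' = (b, a)"
        by (simp add: prod_eq_iff)
    qed
  qed
  ultimately show ?thesis
    using subgroup_gshift[OF G.ev_subgroup] subgroup_gshift[OF G.od_subgroup]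
    by (simp add: graded_def graded_axioms_def gshift_def)
qed

lemma gpres_gsum_mult:
  assumes K: "graded K" and g: "gpres G K g" and h: "gpres H K h"
  shows "gpres (gsum G H) K (\<lambda>(x, y). g x \<otimes>\<^bsub>K\<^esub> h y)"
proof -
  interpret K: graded K by (rule K)
  have gh: "g \<in> hom G K" "h \<in> hom H K"
    using g h by (simp_all add: gpres_def)
  have "(\<lambda>(x, y). g x \<otimes>\<^bsub>K\<^esub> h y) \<in> hom (gsum G H) K"
    using hom_in_carrier[OF gh(1)] hom_in_carrier[OF gh(2)] hom_mult[OF gh(1)] hom_mult[OF gh(2)]
    by (intro homI) (auto simp: K.m_ac)
  moreover have "g x \<otimes>\<^bsub>K\<^esub> h y \<in> ev_part K" if "x \<in> ev_part G" "y \<in> ev_part H" for x y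
    using that g h subgroup.m_closed[OF K.ev_subgroup] by (auto simp: gpres_def image_subset_iff)
  moreover have "g x \<otimes>\<^bsub>K\<^esub> h y \<in> od_part K" if "x \<in> od_part G" "y \<in> od_part H" for x y
    using that g h subgroup.m_closed[OF K.od_subgroup] by (auto simp: gpres_def image_subset_iff)
  ultimately show ?thesis
    by (auto simp: gpres_def)
qed

definition closed_under_components :: "('a, 'm) gmonoid_scheme \<Rightarrow> 'a set \<Rightarrow> bool"
  where "closed_under_components G S \<longleftrightarrow>
    (\<forall>x\<in>S. \<forall>a\<in>ev_part G. \<forall>b\<in>od_part G. x = a \<otimes>\<^bsub>G\<^esub> b \<longrightarrow> a \<in> S \<and> b \<in> S)"

definition gsub :: "('a, 'm) gmonoid_scheme \<Rightarrow> 'a set \<Rightarrow> ('a, 'm) gmonoid_scheme"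
  where "gsub G S = G\<lparr>carrier := S, ev_part := ev_part G \<inter> S, od_part := od_part G \<inter> S\<rparr>"

lemma gsub_simps [simp]:
  "carrier (gsub G S) = S"
  "monoid.mult (gsub G S) = monoid.mult G"
  "monoid.one (gsub G S) = monoid.one G"
  "ev_part (gsub G S) = ev_part G \<inter> S"
  "od_part (gsub G S) = od_part G \<inter> S"
  by (simp_all add: gsub_def)

lemma gshift_gsub: "gshift (gsub G S) = gsub (gshift G) S"
  by (simp add: gshift_def gsub_def)

lemma gsub_nat_pow [simp]: "x [^]\<^bsub>gsub G S\<^esub> (n::nat) = x [^]\<^bsub>G\<^esub> n"
  by (induction n) auto

context
  fixes G :: "('a, 'm) gmonoid_scheme" (structure) and S
  assumes comm_group: "comm_group G" and S: "subgroup S G"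
begin

interpretation comm_group G
  by (rule comm_group)

lemma comm_group_gsub: "comm_group (gsub G S)"
proof (rule comm_groupI)
  fix x
  assume "x \<in> carrier (gsub G S)"
  then show "\<exists>y\<in>carrier (gsub G S). y \<otimes>\<^bsub>gsub G S\<^esub> x = \<one>\<^bsub>gsub G S\<^esub>"
    using S by (intro bexI[of _ "inv x"]) (simp_all add: subgroup.m_inv_closed subgroup.mem_carrier[OF S])
qed (simp_all add: S subgroup.m_closed subgroup.one_closed m_ac subgroup.mem_carrier[OF S])

lemma gsub_inv [simp]: "x \<in> S \<Longrightarrow> inv\<^bsub>gsub G S\<^esub> x = inv x"
proof -
  interpret S: comm_group "gsub G S"
    by (rule comm_group_gsub)
  show "x \<in> S \<Longrightarrow> inv\<^bsub>gsub G S\<^esub> x = inv x"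
    by (rule S.inv_equality) (simp_all add: S subgroup.m_inv_closed subgroup.mem_carrier[OF S])
qed

lemma one_minus_gsub: "x \<in> S \<Longrightarrow> f x \<in> S \<Longrightarrow> one_minus (gsub G S) f x = one_minus G f x"
  by (simp add: one_minus_def)

lemma normop_gsub:
  assumes f: "\<And>y. y \<in> S \<Longrightarrow> f y \<in> S" and x: "x \<in> S"
  shows "normop p (gsub G S) f x = normop p G f x"
proof -
  interpret S: comm_group "gsub G S"
    by (rule comm_group_gsub)
  have f_iter: "(f ^^ i) x \<in> S" for i
    by (induction i) (simp_all add: x f)
  have "finprod (gsub G S) (\<lambda>i. (f ^^ i) x) {..<n} = finprod G (\<lambda>i. (f ^^ i) x) {..<n}" for n
  proof (induction n)
    case (Suc n)
    then show ?case
      using f_iter S by (simp add: S.finprod_lessThan_Suc finprod_lessThan_Suc subgroup.mem_carrier)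
  qed (simp add: S.finprod_empty)
  then show ?thesis
    by (simp add: normop_def)
qed

lemma upd_gsub:
  assumes upd: "upd p G" and root_closed: "\<And>x. x \<in> carrier G \<Longrightarrow> x [^] p \<in> S \<Longrightarrow> x \<in> S"
  shows "upd p (gsub G S)"
proof -
  have "inj_on (\<lambda>x. x [^] p) S"
    using upd subgroup.subset[OF S] unfolding upd_def bij_betw_def by (rule inj_on_subset[OF conjunct1])
  moreover have "(\<lambda>x. x [^] p) ` S = S"
  proof
    show "(\<lambda>x. x [^] p) ` S \<subseteq> S"
      using subgroup_nat_pow_closed[OF S] by auto
    show "S \<subseteq> (\<lambda>x. x [^] p) ` S"
    proof
      fix y
      assume y: "y \<in> S"
      then obtain x where "x \<in> carrier G" "y = x [^] p"
        using upd subgroup.mem_carrier[OF S] unfolding upd_def bij_betw_def by blast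
      then show "y \<in> (\<lambda>x. x [^] p) ` S"
        using y root_closed by blast
    qed
  qed
  ultimately show ?thesis
    by (simp add: upd_def bij_betw_def)
qed

end

lemma graded_gsub:
  assumes G: "graded G" and S: "subgroup S G" and closed: "closed_under_components G S"
  shows "graded (gsub G S)"
proof -
  interpret G: graded G by (rule G)
  have "subgroup (T \<inter> S) (gsub G S)" if "subgroup T G" for T
    using that S by (intro subgroup.intro)
      (auto simp: subgroup.m_closed subgroup.one_closed subgroup.m_inv_closed
        gsub_inv[OF G.comm_group_axioms S] dest: subgroup.mem_carrier)
  moreover have "\<exists>!ab. fst ab \<in> ev_part G \<inter> S \<and> snd ab \<in> od_part G \<inter> S \<and> x = fst ab \<otimes>\<^bsub>G\<^esub> snd ab"
    if x: "x \<in> S" for x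
  proof -
    obtain a b where ab: "a \<in> ev_part G" "b \<in> od_part G" "x = a \<otimes>\<^bsub>G\<^esub> b"
      using G.decomp x S subgroup.mem_carrier by metis
    then have "a \<in> S" "b \<in> S"
      using closed x unfolding closed_under_components_def by blast+
    then show ?thesis
      using ab G.decomp_eq by (intro ex1I[of _ "(a, b)"]) auto
  qed
  ultimately show ?thesis
    using comm_group_gsub[OF G.comm_group_axioms S] G.ev_subgroup G.od_subgroup
    by (simp add: graded_def graded_axioms_def)
qed

lemma gpres_gsub:
  assumes g: "gpres G H g" and S: "subgroup S G"
  shows "gpres (gsub G S) H g"
proof -
  have "g \<in> hom G H"
    using g by (simp add: gpres_def)
  then have "g \<in> hom (gsub G S) H"
    by (auto simp: hom_def subgroup.mem_carrier[OF S])
  then show ?thesis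
    using g by (auto simp: gpres_def)
qed

lemma gpres_gsub_gsub:
  assumes g: "gpres G H g" and S: "subgroup S G" and T: "g ` S \<subseteq> T"
  shows "gpres (gsub G S) (gsub H T) g"
proof -
  have "g \<in> hom G H"
    using g by (simp add: gpres_def)
  then have "g \<in> hom (gsub G S) (gsub H T)"
    using T by (auto simp: hom_def subgroup.mem_carrier[OF S])
  then show ?thesis
    using g T by (auto simp: gpres_def)
qed

lemma kernel_closed_under_components:
  assumes G: "graded G" and H: "graded H" and h: "gpres G H h \<or> grev G H h"
  shows "closed_under_components G (kernel G H h)"
  unfolding closed_under_components_def
proof (intro ballI impI)
  interpret G: graded G by (rule G)
  interpret H: graded H by (rule H)
  fix x a b
  assume x: "x \<in> kernel G H h" and a: "a \<in> ev_part G" and b: "b \<in> od_part G"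
    and x_eq: "x = a \<otimes>\<^bsub>G\<^esub> b"
  have h_hom: "h \<in> hom G H"
    using h by (auto simp: gpres_def grev_def)
  have hab: "h a \<otimes>\<^bsub>H\<^esub> h b = \<one>\<^bsub>H\<^esub>"
    using x x_eq a b hom_mult[OF h_hom] by (simp add: kernel_def)
  have "h a = \<one>\<^bsub>H\<^esub> \<and> h b = \<one>\<^bsub>H\<^esub>"
    using h
  proof
    assume "gpres G H h"
    then show ?thesis
      using H.ev_od_eq_one[OF _ _ hab] a b by (auto simp: gpres_def)
  next
    assume "grev G H h"
    moreover have "h b \<otimes>\<^bsub>H\<^esub> h a = \<one>\<^bsub>H\<^esub>"
      using hab a b hom_in_carrier[OF h_hom] H.m_comm by auto
    ultimately show ?thesis
      using H.ev_od_eq_one a b by (auto simp: grev_def image_subset_iff)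
  qed
  then show "a \<in> kernel G H h \<and> b \<in> kernel G H h"
    using a b by (simp add: kernel_def)
qed

lemma kernel_root_closed:
  assumes G: "group G" and H: "group H" and h: "h \<in> hom G H" and tf: "ptorsion_free p H"
    and x: "x \<in> carrier G" "x [^]\<^bsub>G\<^esub> p \<in> kernel G H h"
  shows "x \<in> kernel G H h"
proof -
  have "h x [^]\<^bsub>H\<^esub> p = \<one>\<^bsub>H\<^esub>"
    using x hom_nat_pow[OF h x(1) G H] by (simp add: kernel_def)
  then show ?thesis
    using tf x(1) hom_in_carrier[OF h x(1)] by (simp add: kernel_def ptorsion_freeD)
qed

definition proot :: "nat \<Rightarrow> ('a, 'm) monoid_scheme \<Rightarrow> 'a \<Rightarrow> 'a"
  where "proot p G y = (THE x. x \<in> carrier G \<and> x [^]\<^bsub>G\<^esub> p = y)"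

locale upd_group = comm_group G for G (structure) +
  fixes p :: nat
  assumes upd: "upd p G"
begin

lemma nat_pow_inj: "x \<in> carrier G \<Longrightarrow> y \<in> carrier G \<Longrightarrow> x [^] p = y [^] p \<Longrightarrow> x = y"
  using upd unfolding upd_def bij_betw_def inj_on_def by blast

lemma proot_eq: "x \<in> carrier G \<Longrightarrow> x [^] p = y \<Longrightarrow> proot p G y = x"
  unfolding proot_def using nat_pow_inj by (intro the_equality) auto

lemma proot_closed [simp]: "y \<in> carrier G \<Longrightarrow> proot p G y \<in> carrier G"
  and proot_pow [simp]: "y \<in> carrier G \<Longrightarrow> proot p G y [^] p = y"
proof -
  assume y: "y \<in> carrier G"
  then obtain x where x: "x \<in> carrier G" "x [^] p = y"
    using upd unfolding upd_def bij_betw_def by (metis imageE)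
  then show "proot p G y \<in> carrier G" "proot p G y [^] p = y"
    using proot_eq[OF x] by simp_all
qed

lemma proot_nat_pow [simp]: "x \<in> carrier G \<Longrightarrow> proot p G (x [^] p) = x"
  by (rule proot_eq) simp_all

lemma proot_mult: "x \<in> carrier G \<Longrightarrow> y \<in> carrier G \<Longrightarrow> proot p G (x \<otimes> y) = proot p G x \<otimes> proot p G y"
  by (rule proot_eq) (simp_all add: nat_pow_distrib)

end

lemma proot_gpres:
  assumes G: "graded G" and upd: "upd p G"
  shows "gpres G G (proot p G)"
proof -
  interpret graded G by (rule G)
  interpret upd_group G p
    by unfold_locales (rule upd)
  have "proot p G \<in> hom G G"
    by (intro homI) (simp_all add: proot_mult)
  moreover have inj: "inj_on (\<lambda>x. x [^]\<^bsub>G\<^esub> p) (carrier G)"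
    using upd by (simp add: upd_def bij_betw_def)
  moreover have "proot p G y \<in> ev_part G" if "y \<in> ev_part G" for y
    using gpres_inj_on_reflects_ev[OF G G nat_pow_gpres inj] that by simp
  moreover have "proot p G y \<in> od_part G" if "y \<in> od_part G" for y
    using gpres_inj_on_reflects_od[OF G G nat_pow_gpres inj] that by simp
  ultimately show ?thesis
    by (auto simp: gpres_def)
qed

section \<open>Isomorphisms of \<open>\<KK>\<close>-modules\<close>

lemma bij_betw_of_trivial_kernel:
  assumes "group G" "group H" "h \<in> hom G H"
    and "\<And>x. x \<in> carrier G \<Longrightarrow> h x = \<one>\<^bsub>H\<^esub> \<Longrightarrow> x = \<one>\<^bsub>G\<^esub>" and "carrier H \<subseteq> h ` carrier G"
  shows "bij_betw h (carrier G) (carrier H)"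
proof -
  interpret group_hom G H h
    using assms(1-3) by (simp add: group_hom_def group_hom_axioms_def)
  show ?thesis
    using iso_iff assms(4,5) by (auto simp: iso_def)
qed

lemma inv_into_commute:
  assumes bj: "bij_betw gj Cj Dj" and bk: "bij_betw gk Ck Dk"
    and comm: "\<forall>y\<in>Ck. gj (aN y) = aM (gk y)" and closed: "\<forall>y\<in>Ck. aN y \<in> Cj"
  shows "\<forall>x\<in>Dk. inv_into Cj gj (aM x) = aN (inv_into Ck gk x)"
proof
  fix x
  assume x: "x \<in> Dk"
  have "inv_into Ck gk x \<in> Ck" "gk (inv_into Ck gk x) = x"
    using x bk by (auto simp: bij_betw_def intro: inv_into_into f_inv_into_f)
  then have "aM x = gj (aN (inv_into Ck gk x))"
    using comm by metis
  then show "inv_into Cj gj (aM x) = aN (inv_into Ck gk x)"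
    using bj closed \<open>inv_into Ck gk x \<in> Ck\<close> by (simp add: bij_betw_def inv_into_f_f)
qed

lemma kiso_of_bij_kmorph:
  fixes M :: "('a, 'b, 'c) kmod" and N :: "('d, 'e, 'f) kmod"
  assumes M: "graded (M0 M)" "graded (M1 M)" "graded (M2 M)"
    and N: "graded (M0 N)" "graded (M1 N)" "graded (M2 N)"
    and g: "kmorph N M g0 g1 g2"
    and b0: "bij_betw g0 (carrier (M0 N)) (carrier (M0 M))"
    and b1: "bij_betw g1 (carrier (M1 N)) (carrier (M1 M))"
    and b2: "bij_betw g2 (carrier (M2 N)) (carrier (M2 M))"
    and closed: "\<forall>y\<in>carrier (M1 N). a01 N y \<in> carrier (M0 N)"
      "\<forall>y\<in>carrier (M0 N). a10 N y \<in> carrier (M1 N)"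
      "\<forall>y\<in>carrier (M2 N). a12 N y \<in> carrier (M1 N)"
      "\<forall>y\<in>carrier (M1 N). a21 N y \<in> carrier (M2 N)"
      "\<forall>y\<in>carrier (M2 N). a02 N y \<in> carrier (M0 N)"
      "\<forall>y\<in>carrier (M0 N). a20 N y \<in> carrier (M2 N)"
  shows "kiso M N"
proof -
  define f0 where "f0 = inv_into (carrier (M0 N)) g0"
  define f1 where "f1 = inv_into (carrier (M1 N)) g1"
  define f2 where "f2 = inv_into (carrier (M2 N)) g2"
  have gk: "gpres (M0 N) (M0 M) g0" "gpres (M1 N) (M1 M) g1" "gpres (M2 N) (M2 M) g2"
    "\<forall>x\<in>carrier (M1 N). g0 (a01 N x) = a01 M (g1 x)"
    "\<forall>x\<in>carrier (M0 N). g1 (a10 N x) = a10 M (g0 x)"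
    "\<forall>x\<in>carrier (M2 N). g1 (a12 N x) = a12 M (g2 x)"
    "\<forall>x\<in>carrier (M1 N). g2 (a21 N x) = a21 M (g1 x)"
    "\<forall>x\<in>carrier (M2 N). g0 (a02 N x) = a02 M (g2 x)"
    "\<forall>x\<in>carrier (M0 N). g2 (a20 N x) = a20 M (g0 x)"
    using g unfolding kmorph_def by blast+
  have "kmorph M N f0 f1 f2"
    unfolding kmorph_def f0_def f1_def f2_def
    using gpres_inv_into[OF N(1) M(1) gk(1) b0] gpres_inv_into[OF N(2) M(2) gk(2) b1]
      gpres_inv_into[OF N(3) M(3) gk(3) b2]
      inv_into_commute[OF b0 b1 gk(4) closed(1)] inv_into_commute[OF b1 b0 gk(5) closed(2)]
      inv_into_commute[OF b1 b2 gk(6) closed(3)] inv_into_commute[OF b2 b1 gk(7) closed(4)]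
      inv_into_commute[OF b0 b2 gk(8) closed(5)] inv_into_commute[OF b2 b0 gk(9) closed(6)]
    by blast
  moreover have "\<forall>x\<in>carrier (M0 N). f0 (g0 x) = x" "\<forall>y\<in>carrier (M0 M). g0 (f0 y) = y"
    "\<forall>x\<in>carrier (M1 N). f1 (g1 x) = x" "\<forall>y\<in>carrier (M1 M). g1 (f1 y) = y"
    "\<forall>x\<in>carrier (M2 N). f2 (g2 x) = x" "\<forall>y\<in>carrier (M2 M). g2 (f2 y) = y"
    unfolding f0_def f1_def f2_def using b0 b1 b2
    by (auto simp: bij_betw_def inv_into_f_f f_inv_into_f)
  ultimately show ?thesis
    unfolding kiso_def using g by blast
qed

section \<open>Splitting a uniquely divisible exact \<open>\<KK>\<close>-module\<close>

locale upd_exact_kmodule =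
  fixes p :: nat and M :: "('a, 'b, 'c) kmod"
  assumes prime: "prime p" and kmodule: "kmodule p M" and exact: "exact_kmodule M"
    and upd_0: "upd p (M0 M)" and upd_1: "upd p (M1 M)" and upd_2: "upd p (M2 M)"
begin

sublocale exact_kdiagram p "M0 M" "M1 M" "M2 M" "a01 M" "a10 M" "a12 M" "a21 M" "a02 M" "a20 M"
  by (rule kmodule_kdiagram[OF prime kmodule exact])

sublocale r0: upd_group "M0 M" p by unfold_locales (rule upd_0)
sublocale r1: upd_group "M1 M" p by unfold_locales (rule upd_1)
sublocale r2: upd_group "M2 M" p by unfold_locales (rule upd_2)

lemma graded_M0: "graded (M0 M)" and graded_M1: "graded (M1 M)" and graded_M2: "graded (M2 M)"
  using kmodule by (simp_all add: kmodule_def graded_group_iff_graded)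

lemma gpres_01: "gpres (M1 M) (M0 M) (a01 M)" and gpres_10: "gpres (M0 M) (M1 M) (a10 M)"
  and grev_12: "grev (M2 M) (M1 M) (a12 M)" and grev_21: "grev (M1 M) (M2 M) (a21 M)"
  and gpres_02: "gpres (M2 M) (M0 M) (a02 M)" and gpres_20: "gpres (M0 M) (M2 M) (a20 M)"
  using kmodule by (simp_all add: kmodule_def)

lemma ptorsion_free_M0: "ptorsion_free p (M0 M)"
  and ptorsion_free_M1: "ptorsion_free p (M1 M)"
  and ptorsion_free_M2: "ptorsion_free p (M2 M)"
  using upd_0 upd_1 upd_2 upd_iff_ptorsion_free_pdivisible g0.comm_group_axioms
    g1.comm_group_axioms g2.comm_group_axioms by blast+

lemma a01_a10_of_kernel_20:
  "x \<in> carrier (M0 M) \<Longrightarrow> a20 M x = \<one>\<^bsub>M2 M\<^esub> \<Longrightarrow> a01 M (a10 M x) = x [^]\<^bsub>M0 M\<^esub> p"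
  using norm_0 e0.normop_one_minus_of_fixed by simp

lemma a10_a01_of_kernel_21:
  "x \<in> carrier (M1 M) \<Longrightarrow> a21 M x = \<one>\<^bsub>M2 M\<^esub> \<Longrightarrow> a10 M (a01 M x) = x [^]\<^bsub>M1 M\<^esub> p"
  using norm_1 e1.normop_one_minus_of_fixed by simp

definition X_set where "X_set = kernel (M0 M) (M2 M) (a20 M)"
definition Y_set where "Y_set = kernel (M0 M) (M1 M) (a10 M)"
definition Z_set where "Z_set = kernel (M1 M) (M0 M) (a01 M)"

definition X_group where "X_group = gsub (M0 M) X_set"
definition Y_group where "Y_group = gsub (M0 M) Y_set"
definition Z_group where "Z_group = gsub (M1 M) Z_set"

definition theta_Y where "theta_Y = one_minus (M0 M) (a02 M \<circ> a20 M)"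
definition theta_Z where "theta_Z = one_minus (M1 M) (a12 M \<circ> a21 M)"

lemma X_set_iff [simp]: "x \<in> X_set \<longleftrightarrow> x \<in> carrier (M0 M) \<and> a20 M x = \<one>\<^bsub>M2 M\<^esub>"
  and Y_set_iff [simp]: "x \<in> Y_set \<longleftrightarrow> x \<in> carrier (M0 M) \<and> a10 M x = \<one>\<^bsub>M1 M\<^esub>"
  and Z_set_iff [simp]: "z \<in> Z_set \<longleftrightarrow> z \<in> carrier (M1 M) \<and> a01 M z = \<one>\<^bsub>M0 M\<^esub>"
  by (simp_all add: X_set_def Y_set_def Z_set_def kernel_def)

lemma X_group_simps [simp]:
  "carrier X_group = X_set" "\<one>\<^bsub>X_group\<^esub> = \<one>\<^bsub>M0 M\<^esub>" "x [^]\<^bsub>X_group\<^esub> (n::nat) = x [^]\<^bsub>M0 M\<^esub> n"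
  and Y_group_simps [simp]: "carrier Y_group = Y_set" "\<one>\<^bsub>Y_group\<^esub> = \<one>\<^bsub>M0 M\<^esub>"
  and Z_group_simps [simp]: "carrier Z_group = Z_set" "\<one>\<^bsub>Z_group\<^esub> = \<one>\<^bsub>M1 M\<^esub>"
  by (simp_all add: X_group_def Y_group_def Z_group_def)

lemma subgroup_X_set: "subgroup X_set (M0 M)"
  and subgroup_Y_set: "subgroup Y_set (M0 M)"
  and subgroup_Z_set: "subgroup Z_set (M1 M)"
  unfolding X_set_def Y_set_def Z_set_def
  by (rule h20.subgroup_kernel h10.subgroup_kernel h01.subgroup_kernel)+

lemma graded_X_group: "graded X_group"
  unfolding X_group_def X_set_def
  using graded_gsub[OF graded_M0 h20.subgroup_kernel] kernel_closed_under_components graded_M0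
    graded_M2 gpres_20 by blast

lemma graded_Y_group: "graded Y_group"
  unfolding Y_group_def Y_set_def
  using graded_gsub[OF graded_M0 h10.subgroup_kernel] kernel_closed_under_components graded_M0
    graded_M1 gpres_10 by blast

lemma graded_Z_group: "graded Z_group"
  unfolding Z_group_def Z_set_def
  using graded_gsub[OF graded_M1 h01.subgroup_kernel] kernel_closed_under_components graded_M1
    graded_M0 gpres_01 by blast

lemma upd_X_group: "upd p X_group"
  unfolding X_group_def X_set_def
  by (rule upd_gsub[OF g0.comm_group_axioms h20.subgroup_kernel upd_0 kernel_root_closed[OF
        g0.is_group g2.is_group hom_20 ptorsion_free_M2]])

lemma upd_Y_group: "upd p Y_group"
  unfolding Y_group_def Y_set_def
  by (rule upd_gsub[OF g0.comm_group_axioms h10.subgroup_kernel upd_0 kernel_root_closed[OF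
        g0.is_group g1.is_group hom_10 ptorsion_free_M1]])

lemma upd_Z_group: "upd p Z_group"
  unfolding Z_group_def Z_set_def
  by (rule upd_gsub[OF g1.comm_group_axioms h01.subgroup_kernel upd_1 kernel_root_closed[OF
        g1.is_group g0.is_group hom_01 ptorsion_free_M0]])

lemma proot_X_set: "x \<in> X_set \<Longrightarrow> proot p (M0 M) x \<in> X_set"
  using kernel_root_closed[OF g0.is_group g2.is_group hom_20 ptorsion_free_M2, of "proot p (M0 M) x"]
  unfolding X_set_def kernel_def by simp

lemma a01_a10_proot: "x \<in> X_set \<Longrightarrow> a01 M (a10 M (proot p (M0 M) x)) = x"
  using proot_X_set a01_a10_of_kernel_20 by simp

lemma X_Y_disjoint:
  assumes "x \<in> X_set" "x \<in> Y_set"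
  shows "x = \<one>\<^bsub>M0 M\<^esub>"
proof -
  have "x [^]\<^bsub>M0 M\<^esub> p = \<one>\<^bsub>M0 M\<^esub>"
    using assms a01_a10_of_kernel_20[of x] by simp
  then show ?thesis
    using assms ptorsion_freeD[OF ptorsion_free_M0] by simp
qed

text \<open>On \<open>X\<close> the norm of \<open>t0\<close> is \<open>p\<close>, so \<open>m \<mapsto> (a01 (a10 m))\<^sup>1\<^sup>/\<^sup>p\<close> projects \<open>M0\<close> onto \<open>X\<close>
  along \<open>Y\<close>.\<close>

definition projX where "projX m = proot p (M0 M) (a01 M (a10 M m))"

lemma projX_X_set: "m \<in> carrier (M0 M) \<Longrightarrow> projX m \<in> X_set"
  unfolding projX_def by (rule proot_X_set) simp

lemma a10_projX: assumes m: "m \<in> carrier (M0 M)" shows "a10 M (projX m) = a10 M m"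
proof -
  have "a10 M (projX m) [^]\<^bsub>M1 M\<^esub> p = a10 M (a01 M (a10 M m))"
    using m unfolding projX_def by (simp flip: h10.hom_nat_pow)
  also have "\<dots> = a10 M m [^]\<^bsub>M1 M\<^esub> p"
    using m by (simp add: a10_a01_of_kernel_21)
  finally have "a10 M (projX m) [^]\<^bsub>M1 M\<^esub> p = a10 M m [^]\<^bsub>M1 M\<^esub> p" .
  moreover have "a10 M (projX m) \<in> carrier (M1 M)" "a10 M m \<in> carrier (M1 M)"
    using m projX_X_set by simp_all
  ultimately show ?thesis
    using r1.nat_pow_inj by blast
qed

lemma minus_projX_Y_set: "m \<in> carrier (M0 M) \<Longrightarrow> m \<otimes>\<^bsub>M0 M\<^esub> inv\<^bsub>M0 M\<^esub> projX m \<in> Y_set"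
  using projX_X_set a10_projX by simp

end

context upd_exact_kmodule
begin

lemma theta_Y_Y_set: "y \<in> Y_set \<Longrightarrow> theta_Y y \<in> Y_set"
  by (simp add: theta_Y_def one_minus_def)

lemma theta_Z_Z_set: "z \<in> Z_set \<Longrightarrow> theta_Z z \<in> Z_set"
  by (simp add: theta_Z_def one_minus_def)

lemma one_minus_theta_Y:
  assumes y: "y \<in> Y_set"
  shows "one_minus Y_group theta_Y y = a02 M (a20 M y)"
proof -
  have "one_minus Y_group theta_Y y = one_minus (M0 M) theta_Y y"
    unfolding Y_group_def using y theta_Y_Y_set[OF y]
    by (rule one_minus_gsub[OF g0.comm_group_axioms subgroup_Y_set])
  also have "\<dots> = a02 M (a20 M y)"
    using y by (simp add: theta_Y_def one_minus_def g0.inv_mult g0.m_assoc[symmetric])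
  finally show ?thesis .
qed

lemma one_minus_theta_Z:
  assumes z: "z \<in> Z_set"
  shows "one_minus Z_group theta_Z z = a12 M (a21 M z)"
proof -
  have "one_minus Z_group theta_Z z = one_minus (M1 M) theta_Z z"
    unfolding Z_group_def using z theta_Z_Z_set[OF z]
    by (rule one_minus_gsub[OF g1.comm_group_axioms subgroup_Z_set])
  also have "\<dots> = a12 M (a21 M z)"
    using z by (simp add: theta_Z_def one_minus_def g1.inv_mult g1.m_assoc[symmetric])
  finally show ?thesis .
qed

lemma zp_module_X: "zp_module p X_group"
  using graded_X_group upd_X_group by (simp add: zp_module_def graded_group_iff_graded)

lemma zth_module_Y: "zth_module p Y_group theta_Y"
proof -
  have "gpres (M0 M) (M0 M) theta_Y"
    unfolding theta_Y_def by (rule gpres_one_minus[OF graded_M0 gpres_comp[OF gpres_20 gpres_02]])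
  then have "gpres Y_group Y_group theta_Y"
    unfolding Y_group_def using subgroup_Y_set by (rule gpres_gsub_gsub) (auto intro: theta_Y_Y_set)
  moreover have "normop p Y_group theta_Y y = \<one>\<^bsub>Y_group\<^esub>" if y: "y \<in> carrier Y_group" for y
  proof -
    have "normop p Y_group theta_Y y = normop p (M0 M) theta_Y y"
      using y unfolding Y_group_def
      by (intro normop_gsub[OF g0.comm_group_axioms subgroup_Y_set theta_Y_Y_set]) simp_all
    also have "\<dots> = \<one>\<^bsub>M0 M\<^esub>"
      using bspec[OF norm_0, of y] y by (simp add: theta_Y_def Y_group_def)
    finally show ?thesis
      by (simp add: Y_group_def)
  qed
  ultimately show ?thesis
    using graded_Y_group upd_Y_group by (simp add: zth_module_def graded_group_iff_graded)
qed

lemma zth_module_Z: "zth_module p Z_group theta_Z"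
proof -
  have "gpres (M1 M) (M1 M) theta_Z"
    unfolding theta_Z_def by (rule gpres_one_minus[OF graded_M1 grev_comp[OF grev_21 grev_12]])
  then have "gpres Z_group Z_group theta_Z"
    unfolding Z_group_def using subgroup_Z_set by (rule gpres_gsub_gsub) (auto intro: theta_Z_Z_set)
  moreover have "normop p Z_group theta_Z z = \<one>\<^bsub>Z_group\<^esub>" if z: "z \<in> carrier Z_group" for z
  proof -
    have "normop p Z_group theta_Z z = normop p (M1 M) theta_Z z"
      using z unfolding Z_group_def
      by (intro normop_gsub[OF g1.comm_group_axioms subgroup_Z_set theta_Z_Z_set]) simp_all
    also have "\<dots> = \<one>\<^bsub>M1 M\<^esub>"
      using bspec[OF norm_1, of z] z by (simp add: theta_Z_def Z_group_def)
    finally show ?thesis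
      by (simp add: Z_group_def)
  qed
  ultimately show ?thesis
    using graded_Z_group upd_Z_group by (simp add: zth_module_def graded_group_iff_graded)
qed

end

context upd_exact_kmodule
begin

definition E where "E = Emod p X_group Y_group theta_Y Z_group theta_Z"

lemma E_simps:
  "M0 E = gsum X_group Y_group" "M1 E = gsum X_group Z_group" "M2 E = gsum Y_group (gshift Z_group)"
  "a01 E = (\<lambda>(x, z). (x, \<one>\<^bsub>Y_group\<^esub>))"
  "a10 E = (\<lambda>(x, y). (x [^]\<^bsub>X_group\<^esub> p, \<one>\<^bsub>Z_group\<^esub>))"
  "a12 E = (\<lambda>(y, z). (\<one>\<^bsub>X_group\<^esub>, one_minus Z_group theta_Z z))"
  "a21 E = (\<lambda>(x, z). (\<one>\<^bsub>Y_group\<^esub>, z))"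
  "a02 E = (\<lambda>(y, z). (\<one>\<^bsub>X_group\<^esub>, one_minus Y_group theta_Y y))"
  "a20 E = (\<lambda>(x, y). (y, \<one>\<^bsub>Z_group\<^esub>))"
  by (simp_all add: E_def Emod_def)

lemma carrier_E:
  "carrier (M0 E) = X_set \<times> Y_set" "carrier (M1 E) = X_set \<times> Z_set" "carrier (M2 E) = Y_set \<times> Z_set"
  by (simp_all add: E_simps)

lemma graded_E: "graded (M0 E)" "graded (M1 E)" "graded (M2 E)"
  unfolding E_simps(1-3)
  using graded_gsum graded_gshift graded_X_group graded_Y_group graded_Z_group by auto

lemma E_maps_closed:
  "\<forall>y\<in>carrier (M1 E). a01 E y \<in> carrier (M0 E)" "\<forall>y\<in>carrier (M0 E). a10 E y \<in> carrier (M1 E)"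
  "\<forall>y\<in>carrier (M2 E). a12 E y \<in> carrier (M1 E)" "\<forall>y\<in>carrier (M1 E). a21 E y \<in> carrier (M2 E)"
  "\<forall>y\<in>carrier (M2 E). a02 E y \<in> carrier (M0 E)" "\<forall>y\<in>carrier (M0 E). a20 E y \<in> carrier (M2 E)"
  using subgroup_nat_pow_closed[OF subgroup_X_set] theta_Y_Y_set theta_Z_Z_set
  by (auto simp: carrier_E E_simps one_minus_theta_Y one_minus_theta_Z)

text \<open>In \<open>M1\<close> the summand \<open>X\<close> of \<open>E(X, Y, Z)\<close> sits as \<open>a10 (X\<^sup>1\<^sup>/\<^sup>p)\<close>, so that \<open>a01\<close>
  restricts to the identity and \<open>a10\<close> to the \<open>p\<close>-th power on it, as in \<open>E\<close>.\<close>

definition iso0 where "iso0 = (\<lambda>(x, y). x \<otimes>\<^bsub>M0 M\<^esub> y)"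
definition iso1 where "iso1 = (\<lambda>(x, z). a10 M (proot p (M0 M) x) \<otimes>\<^bsub>M1 M\<^esub> z)"
definition iso2 where "iso2 = (\<lambda>(y, z). a20 M y \<otimes>\<^bsub>M2 M\<^esub> a21 M z)"

lemma gpres_iso0: "gpres (M0 E) (M0 M) iso0"
  unfolding E_simps iso0_def X_group_def Y_group_def
  using gpres_gsum_mult[OF graded_M0 gpres_gsub[OF gpres_id subgroup_X_set]
      gpres_gsub[OF gpres_id subgroup_Y_set]] .

lemma gpres_iso1: "gpres (M1 E) (M1 M) iso1"
proof -
  have "gpres (M0 M) (M1 M) (\<lambda>x. a10 M (proot p (M0 M) x))"
    using gpres_comp[OF proot_gpres[OF graded_M0 upd_0] gpres_10] by (simp add: comp_def)
  then show ?thesis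
    unfolding E_simps iso1_def X_group_def Z_group_def
    using gpres_gsum_mult[OF graded_M1 gpres_gsub[OF _ subgroup_X_set]
        gpres_gsub[OF gpres_id subgroup_Z_set]] by blast
qed

lemma gpres_iso2: "gpres (M2 E) (M2 M) iso2"
proof -
  have "gpres (gshift Z_group) (M2 M) (a21 M)"
    unfolding Z_group_def gshift_gsub
    using gpres_gsub[OF _ subgroup_gshift[OF subgroup_Z_set]] gpres_gshift_iff grev_21 by blast
  then show ?thesis
    unfolding E_simps iso2_def
    using gpres_gsum_mult[OF graded_M2 gpres_gsub[OF gpres_20 subgroup_Y_set]] Y_group_def by metis
qed

lemma bij_iso0: "bij_betw iso0 (carrier (M0 E)) (carrier (M0 M))"
proof (rule bij_betw_of_trivial_kernel)
  show "group (M0 E)" "group (M0 M)" "iso0 \<in> hom (M0 E) (M0 M)"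
    using graded_E gpres_iso0 by (simp_all add: graded_def comm_group_def gpres_def)
  show "u = \<one>\<^bsub>M0 E\<^esub>" if "u \<in> carrier (M0 E)" "iso0 u = \<one>\<^bsub>M0 M\<^esub>" for u
  proof -
    obtain x y where u: "u = (x, y)"
      by (cases u)
    with that(1) have xy: "x \<in> X_set" "y \<in> Y_set"
      by (simp_all add: carrier_E del: X_set_iff Y_set_iff)
    have "x = inv\<^bsub>M0 M\<^esub> y"
      using that(2) u xy by (simp add: iso0_def g0.inv_equality)
    then have "x \<in> Y_set"
      using xy(2) subgroup.m_inv_closed[OF subgroup_Y_set] by blast
    then have "x = \<one>\<^bsub>M0 M\<^esub>"
      using X_Y_disjoint xy(1) by blast
    then show ?thesis
      using u xy that(2) by (simp add: iso0_def E_simps)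
  qed
  show "carrier (M0 M) \<subseteq> iso0 ` carrier (M0 E)"
  proof
    fix m
    assume m: "m \<in> carrier (M0 M)"
    then have "m = iso0 (projX m, m \<otimes>\<^bsub>M0 M\<^esub> inv\<^bsub>M0 M\<^esub> projX m)"
      using projX_X_set[OF m] by (simp add: iso0_def g0.m_lcomm)
    then show "m \<in> iso0 ` carrier (M0 E)"
      using m projX_X_set minus_projX_Y_set by (auto simp: carrier_E)
  qed
qed

end

context upd_exact_kmodule
begin

definition projZ where "projZ n = n \<otimes>\<^bsub>M1 M\<^esub> inv\<^bsub>M1 M\<^esub> a10 M (proot p (M0 M) (a01 M n))"

lemma projZ_Z_set: "n \<in> carrier (M1 M) \<Longrightarrow> projZ n \<in> Z_set"
  using a01_a10_proot[of "a01 M n"] by (simp add: projZ_def)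

lemma bij_iso1: "bij_betw iso1 (carrier (M1 E)) (carrier (M1 M))"
proof (rule bij_betw_of_trivial_kernel)
  show "group (M1 E)" "group (M1 M)" "iso1 \<in> hom (M1 E) (M1 M)"
    using graded_E gpres_iso1 by (simp_all add: graded_def comm_group_def gpres_def)
  show "u = \<one>\<^bsub>M1 E\<^esub>" if "u \<in> carrier (M1 E)" "iso1 u = \<one>\<^bsub>M1 M\<^esub>" for u
  proof -
    obtain x z where u: "u = (x, z)"
      by (cases u)
    with that(1) have xz: "x \<in> X_set" "z \<in> Z_set"
      by (simp_all add: carrier_E del: X_set_iff Z_set_iff)
    have "a01 M (iso1 u) = x"
      using u xz a01_a10_proot[OF xz(1)] proot_X_set[OF xz(1)] by (simp add: iso1_def)
    then have "x = \<one>\<^bsub>M0 M\<^esub>"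
      using that(2) by simp
    moreover have "proot p (M0 M) \<one>\<^bsub>M0 M\<^esub> = \<one>\<^bsub>M0 M\<^esub>"
      by (rule r0.proot_eq) simp_all
    ultimately show ?thesis
      using u xz that(2) by (simp add: iso1_def E_simps)
  qed
  show "carrier (M1 M) \<subseteq> iso1 ` carrier (M1 E)"
  proof
    fix m
    assume m: "m \<in> carrier (M1 M)"
    then have "m = iso1 (a01 M m, projZ m)"
      by (simp add: iso1_def projZ_def g1.m_lcomm)
    then show "m \<in> iso1 ` carrier (M1 E)"
      using m projZ_Z_set by (auto simp: carrier_E)
  qed
qed

lemma a21_eq_one_if_a12_a21_eq_one:
  assumes z: "z \<in> carrier (M1 M)" and a12: "a12 M (a21 M z) = \<one>\<^bsub>M1 M\<^esub>"
  shows "a21 M z = \<one>\<^bsub>M2 M\<^esub>"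
proof -
  let ?w = "a21 M z"
  have "normop p (M2 M) (one_minus (M2 M) (a20 M \<circ> a02 M)) ?w = ?w [^]\<^bsub>M2 M\<^esub> p"
    using z by (intro e2.normop_one_minus_of_fixed) simp_all
  moreover have "normop p (M2 M) (one_minus (M2 M) (a21 M \<circ> a12 M)) ?w = ?w [^]\<^bsub>M2 M\<^esub> p"
    using z a12 by (intro e2'.normop_one_minus_of_fixed) simp_all
  moreover have "?w \<in> carrier (M2 M)"
    using z by simp
  ultimately have "?w [^]\<^bsub>M2 M\<^esub> p = \<one>\<^bsub>M2 M\<^esub>"
    using norm_2 by auto
  then show ?thesis
    using ptorsion_free_M2 z by (simp add: ptorsion_freeD)
qed

lemma Z_set_eq_one_if_a21_eq_one: assumes z: "z \<in> Z_set" "a21 M z = \<one>\<^bsub>M2 M\<^esub>" shows "z = \<one>\<^bsub>M1 M\<^esub>"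
proof -
  obtain x where x: "x \<in> carrier (M0 M)" "z = a10 M x"
    using z by (auto elim: up0.kernel_g)
  then have "projX x [^]\<^bsub>M0 M\<^esub> p = \<one>\<^bsub>M0 M\<^esub>"
    using z projX_X_set[OF x(1)] a10_projX[OF x(1)] a01_a10_of_kernel_20[of "projX x"] by simp
  then have "projX x = \<one>\<^bsub>M0 M\<^esub>"
    using ptorsion_free_M0 projX_X_set[OF x(1)] by (simp add: ptorsion_freeD)
  then show ?thesis
    using x a10_projX by fastforce
qed

lemma a12_normop_21_12: "w \<in> carrier (M2 M) \<Longrightarrow>
  a12 M (normop p (M2 M) (one_minus (M2 M) (a21 M \<circ> a12 M)) w) = \<one>\<^bsub>M1 M\<^esub>"
  using normop_one_minus_commute[OF comm_group_2 comm_group_1 hom_12 e2'.f_hom e1.f_hom, of w p]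
    bspec[OF norm_1, of "a12 M w"] by simp

lemma a02_normop_20_02: "w \<in> carrier (M2 M) \<Longrightarrow>
  a02 M (normop p (M2 M) (one_minus (M2 M) (a20 M \<circ> a02 M)) w) = \<one>\<^bsub>M0 M\<^esub>"
  using normop_one_minus_commute[OF comm_group_2 comm_group_0 hom_02 e2.f_hom e0.f_hom, of w p]
    bspec[OF norm_0, of "a02 M w"] by simp

lemma iso2_kernel:
  assumes y: "y \<in> Y_set" and z: "z \<in> Z_set" and eq: "a20 M y \<otimes>\<^bsub>M2 M\<^esub> a21 M z = \<one>\<^bsub>M2 M\<^esub>"
  shows "y = \<one>\<^bsub>M0 M\<^esub> \<and> z = \<one>\<^bsub>M1 M\<^esub>"
proof -
  have "a12 M (a21 M z) = a12 M (a20 M y \<otimes>\<^bsub>M2 M\<^esub> a21 M z)"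
    using y z by simp
  then have "a21 M z = \<one>\<^bsub>M2 M\<^esub>"
    using eq z by (intro a21_eq_one_if_a12_a21_eq_one) simp_all
  then have "z = \<one>\<^bsub>M1 M\<^esub>" "a20 M y = \<one>\<^bsub>M2 M\<^esub>"
    using Z_set_eq_one_if_a21_eq_one z eq y by simp_all
  then show ?thesis
    using X_Y_disjoint[of y] y by simp
qed

text \<open>Dividing \<open>p w = N(t2) w + N(s2) w\<close> by \<open>p\<close> splits \<open>w\<close> into a part in \<open>ker a02 = im a21\<close>
  and a part in \<open>ker a12 = im a20\<close>.\<close>

lemma M2_eq_a21_mult_a20:
  assumes w: "w \<in> carrier (M2 M)"
  obtains n m where "n \<in> carrier (M1 M)" "m \<in> carrier (M0 M)" "w = a21 M n \<otimes>\<^bsub>M2 M\<^esub> a20 M m"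
proof -
  define v where "v = proot p (M2 M) (normop p (M2 M) (one_minus (M2 M) (a20 M \<circ> a02 M)) w)"
  define v' where "v' = proot p (M2 M) (normop p (M2 M) (one_minus (M2 M) (a21 M \<circ> a12 M)) w)"
  have vv': "v \<in> carrier (M2 M)" "v' \<in> carrier (M2 M)" "w = v \<otimes>\<^bsub>M2 M\<^esub> v'"
    using w bspec[OF norm_2 w] by (simp_all add: v_def v'_def flip: r2.proot_mult)
  have "a02 M v [^]\<^bsub>M0 M\<^esub> p = \<one>\<^bsub>M0 M\<^esub>" "a12 M v' [^]\<^bsub>M1 M\<^esub> p = \<one>\<^bsub>M1 M\<^esub>"
    using w a02_normop_20_02 a12_normop_21_12
    by (simp_all add: v_def v'_def flip: h02.hom_nat_pow h12.hom_nat_pow)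
  then have "a02 M v = \<one>\<^bsub>M0 M\<^esub>" "a12 M v' = \<one>\<^bsub>M1 M\<^esub>"
    using vv' ptorsion_free_M0 ptorsion_free_M1 by (simp_all add: ptorsion_freeD)
  moreover obtain n where "n \<in> carrier (M1 M)" "v = a21 M n"
    using vv'(1) calculation(1) by (rule up1.kernel_g)
  moreover obtain m where "m \<in> carrier (M0 M)" "v' = a20 M m"
    using vv'(2) calculation(2) by (rule dn0.kernel_g)
  ultimately show thesis
    using that vv'(3) by blast
qed

lemma bij_iso2: "bij_betw iso2 (carrier (M2 E)) (carrier (M2 M))"
proof (rule bij_betw_of_trivial_kernel)
  show "group (M2 E)" "group (M2 M)" "iso2 \<in> hom (M2 E) (M2 M)"
    using graded_E gpres_iso2 by (simp_all add: graded_def comm_group_def gpres_def)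
  show "u = \<one>\<^bsub>M2 E\<^esub>" if "u \<in> carrier (M2 E)" "iso2 u = \<one>\<^bsub>M2 M\<^esub>" for u
  proof -
    obtain y z where u: "u = (y, z)"
      by (cases u)
    with that(1) have "y \<in> Y_set" "z \<in> Z_set"
      by (simp_all add: carrier_E del: Y_set_iff Z_set_iff)
    then have "y = \<one>\<^bsub>M0 M\<^esub> \<and> z = \<one>\<^bsub>M1 M\<^esub>"
      using that(2) u by (intro iso2_kernel) (simp_all add: iso2_def)
    then show ?thesis
      using u by (simp add: E_simps)
  qed
  show "carrier (M2 M) \<subseteq> iso2 ` carrier (M2 E)"
  proof
    fix w
    assume "w \<in> carrier (M2 M)"
    then obtain n m where nm: "n \<in> carrier (M1 M)" "m \<in> carrier (M0 M)"
      "w = a21 M n \<otimes>\<^bsub>M2 M\<^esub> a20 M m"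
      by (rule M2_eq_a21_mult_a20)
    then have "w = iso2 (m \<otimes>\<^bsub>M0 M\<^esub> inv\<^bsub>M0 M\<^esub> projX m, projZ n)"
      using projX_X_set[OF nm(2)] by (simp add: iso2_def projZ_def g2.m_comm)
    then show "w \<in> iso2 ` carrier (M2 E)"
      using nm minus_projX_Y_set projZ_Z_set by (auto simp: carrier_E)
  qed
qed

lemma kmorph_iso: "kmorph E M iso0 iso1 iso2"
  unfolding kmorph_def
proof (intro conjI gpres_iso0 gpres_iso1 gpres_iso2 ballI)
  fix u
  assume "u \<in> carrier (M1 E)"
  then obtain x z where "u = (x, z)" "x \<in> X_set" "z \<in> Z_set"
    by (auto simp: carrier_E simp del: X_set_iff Z_set_iff)
  then show "iso0 (a01 E u) = a01 M (iso1 u)" "iso2 (a21 E u) = a21 M (iso1 u)"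
    using a01_a10_proot proot_X_set by (simp_all add: E_simps iso0_def iso1_def iso2_def)
next
  fix u
  assume "u \<in> carrier (M0 E)"
  then obtain x y where "u = (x, y)" "x \<in> X_set" "y \<in> Y_set"
    by (auto simp: carrier_E simp del: X_set_iff Y_set_iff)
  then show "iso1 (a10 E u) = a10 M (iso0 u)" "iso2 (a20 E u) = a20 M (iso0 u)"
    by (simp_all add: E_simps iso0_def iso1_def iso2_def)
next
  fix u
  assume "u \<in> carrier (M2 E)"
  then obtain y z where "u = (y, z)" "y \<in> Y_set" "z \<in> Z_set"
    by (auto simp: carrier_E simp del: Y_set_iff Z_set_iff)
  moreover have "proot p (M0 M) \<one>\<^bsub>M0 M\<^esub> = \<one>\<^bsub>M0 M\<^esub>"
    by (rule r0.proot_eq) simp_all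
  ultimately show "iso1 (a12 E u) = a12 M (iso2 u)" "iso0 (a02 E u) = a02 M (iso2 u)"
    by (simp_all add: E_simps iso0_def iso1_def iso2_def one_minus_theta_Y one_minus_theta_Z)
qed

lemma kiso_E: "kiso M (Emod p X_group Y_group theta_Y Z_group theta_Z)"
  using kiso_of_bij_kmorph[OF graded_M0 graded_M1 graded_M2 graded_E kmorph_iso bij_iso0 bij_iso1
      bij_iso2 E_maps_closed]
  by (simp add: E_def)

end

theorem theorem7p2:
  fixes p :: nat and M :: "('a, 'b, 'c) kmod"
  assumes "prime p" and "kmodule p M" and "exact_kmodule M"
    and "upd p (M0 M) \<or> upd p (M1 M) \<or> upd p (M2 M)"
  shows "upd p (M0 M) \<and> upd p (M1 M) \<and> upd p (M2 M) \<and>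
    (\<exists>(X :: 'a gmonoid) (Y :: 'a gmonoid) thY (Z :: 'b gmonoid) thZ.
       zp_module p X \<and> zth_module p Y thY \<and> zth_module p Z thZ \<and>
       kiso M (Emod p X Y thY Z thZ))"
proof -
  interpret exact_kdiagram p "M0 M" "M1 M" "M2 M" "a01 M" "a10 M" "a12 M" "a21 M" "a02 M" "a20 M"
    using kmodule_kdiagram assms(1-3) .
  have upd: "upd p (M0 M) \<and> upd p (M1 M) \<and> upd p (M2 M)"
    using upd_all assms(4) .
  then interpret upd_exact_kmodule p M
    using assms(1-3) by (simp add: upd_exact_kmodule_def)
  show ?thesis
    using upd zp_module_X zth_module_Y zth_module_Z kiso_E by blast
qed

end
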